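(* Let $R$ be a $\mathbb{G}$-stopping time and $[R]=\{(t,\omega)\in\mathbb{R}_+\times\Omega: t=R(\omega)\}$ its graph. Then $[R]\in\mathcal{L}^o$ if and only if $$\{R<\infty\}\cap\mathcal{G}_R=\{R<\infty\}\cap\big(\mathcal{N}\vee\sigma(\tau\nmid R)\vee\mathcal{F}_R\big).$$
   Context: Let $(\Omega,\mathcal{A},\mathbb{Q})$ be a probability space with a right-continuous filtration $\mathbb{F}=(\mathcal{F}_t)_{t\ge0}$ such that $\mathcal{F}_0$ contains $\mathcal{N}^{\mathcal{F}_\infty}$, where for a $\sigma$-algebra $\mathcal{T}\subset\mathcal{A}$, $\mathcal{N}^{\mathcal{T}}$ denotes the $\sigma$-algebra generated by all subsets of $\mathcal{T}$-measurable $\mathbb{Q}$-null sets. Let $\tau$ be a random variable with values in $[0,\infty]$, let $\mathcal{N}=\mathcal{N}^{\sigma(\tau)\vee\mathcal{F}_\infty}$, and let $\mathbb{G}=(\mathcal{G}_t)_{t\ge0}$ with $\mathcal{G}_t=\mathcal{N}\vee\bigcap_{s>t}(\mathcal{F}_s\vee\sigma(\tau\wedge s))$. Identities are understood up to $\mathcal{N}$-measurable $\mathbb{Q}$-null sets. For a function $Y''$ on $[0,\infty]\times(\mathbb{R}_+\times\Omega)$, $Y''(\tau)$ denotes $(t,\omega)\mapsto Y''(\tau(\omega),t,\omega)$. A $\mathbb{G}$-optional process $Y$ satisfies the optional splitting formula on a $\mathbb{G}$-optional set $A$ if there exist $Y'\in\mathcal{O}(\mathbb{F})$ and a $\mathcal{B}[0,\infty]\otimes\mathcal{O}(\mathbb{F})$-measurable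 $Y''$ with $Y\mathbf{1}_A=(Y'\mathbf{1}_{[0,\tau)}+Y''(\tau)\mathbf{1}_{[\tau,\infty)})\mathbf{1}_A$; $\mathcal{L}^o$ is the family of $\mathbb{G}$-optional sets on which every $\mathbb{G}$-optional process satisfies it. For a random time $R$, $\mathcal{F}_R=\sigma\{X_R\mathbf{1}_{\{R<\infty\}}: X\ \mathbb{F}\text{-optional}\}$. For $a,b\in[0,\infty]$, $a\nmid b=a$ if $a\le b$ and $=\infty$ if $a>b$ (so $\tau\nmid R$ is the random variable $\omega\mapsto\tau(\omega)\nmid R(\omega)$). For a set $D\subset\Omega$ and a $\sigma$-algebra $\mathcal{T}$, $D\cap\mathcal{T}=\{D\cap B: B\in\mathcal{T}\}$. *)

theory Defs
  imports "HOL-Probability.Probability"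
begin

(* All sigma-algebras on Omega are represented as families of subsets of Omega
   (type 'a set set); sigma-algebras on R_+ x Omega as families of subsets of
   {0..} x Omega. *)

definition sigma_fun :: "'a set \<Rightarrow> ('a \<Rightarrow> 'b::topological_space) \<Rightarrow> 'a set set" where
  "sigma_fun \<Omega> f = sigma_sets \<Omega> {f -` B \<inter> \<Omega> | B. B \<in> sets borel}"

definition null_sigma :: "'a measure \<Rightarrow> 'a set set \<Rightarrow> 'a set set" where
  "null_sigma M T = sigma_sets (space M)
     {D. D \<subseteq> space M \<and> (\<exists>E\<in>T. E \<in> sets M \<and> emeasure M E = 0 \<and> D \<subseteq> E)}"

definition Finf :: "'a set \<Rightarrow> (real \<Rightarrow> 'a set set) \<Rightarrow> 'a set set" where
  "Finf \<Omega> F = sigma_sets \<Omega> (\<Union>t\<in>{0..}. F t)"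

definition usual_filtration :: "'a measure \<Rightarrow> (real \<Rightarrow> 'a set set) \<Rightarrow> bool" where
  "usual_filtration M F \<longleftrightarrow>
     (\<forall>t\<ge>0. sigma_algebra (space M) (F t) \<and> F t \<subseteq> sets M) \<and>
     (\<forall>s t. 0 \<le> s \<longrightarrow> s \<le> t \<longrightarrow> F s \<subseteq> F t) \<and>
     (\<forall>t\<ge>0. F t = (\<Inter>s\<in>{t<..}. F s)) \<and>
     null_sigma M (Finf (space M) F) \<subseteq> F 0"

definition Nsig :: "'a measure \<Rightarrow> (real \<Rightarrow> 'a set set) \<Rightarrow> ('a \<Rightarrow> ennreal) \<Rightarrow> 'a set set" where
  "Nsig M F \<tau> = null_sigma M (sigma_sets (space M) (sigma_fun (space M) \<tau> \<union> Finf (space M) F))"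

definition Gfilt :: "'a measure \<Rightarrow> (real \<Rightarrow> 'a set set) \<Rightarrow> ('a \<Rightarrow> ennreal) \<Rightarrow> real \<Rightarrow> 'a set set" where
  "Gfilt M F \<tau> t = sigma_sets (space M)
     (Nsig M F \<tau> \<union>
      (\<Inter>s\<in>{t<..}. sigma_sets (space M)
          (F s \<union> sigma_fun (space M) (\<lambda>\<omega>. min (\<tau> \<omega>) (ennreal s)))))"

definition cadlag_adapted :: "'a set \<Rightarrow> (real \<Rightarrow> 'a set set) \<Rightarrow> (real \<times> 'a \<Rightarrow> real) \<Rightarrow> bool" where
  "cadlag_adapted \<Omega> F X \<longleftrightarrow>
     (\<forall>t\<ge>0. \<forall>B\<in>sets borel. {\<omega>\<in>\<Omega>. X (t, \<omega>) \<in> B} \<in> F t) \<and>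
     (\<forall>\<omega>\<in>\<Omega>. \<forall>t\<ge>0. ((\<lambda>s. X (s, \<omega>)) \<longlongrightarrow> X (t, \<omega>)) (at_right t) \<and>
                   (0 < t \<longrightarrow> (\<exists>l. ((\<lambda>s. X (s, \<omega>)) \<longlongrightarrow> l) (at_left t))))"

definition optional_sets :: "'a set \<Rightarrow> (real \<Rightarrow> 'a set set) \<Rightarrow> (real \<times> 'a) set set" where
  "optional_sets \<Omega> F = sigma_sets ({0..} \<times> \<Omega>)
     {{p \<in> {0..} \<times> \<Omega>. X p \<in> B} | X B. cadlag_adapted \<Omega> F X \<and> B \<in> sets borel}"

definition optional_measure :: "'a set \<Rightarrow> (real \<Rightarrow> 'a set set) \<Rightarrow> (real \<times> 'a) measure" where
  "optional_measure \<Omega> F = measure_of ({0..} \<times> \<Omega>) (optional_sets \<Omega> F) (\<lambda>_. 0)"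

definition splits_on :: "'a measure \<Rightarrow> (real \<Rightarrow> 'a set set) \<Rightarrow> ('a \<Rightarrow> ennreal)
     \<Rightarrow> (real \<times> 'a \<Rightarrow> real) \<Rightarrow> (real \<times> 'a) set \<Rightarrow> bool" where
  "splits_on M F \<tau> Y A \<longleftrightarrow>
     (\<exists>Y' Y''. Y' \<in> borel_measurable (optional_measure (space M) F) \<and>
        (\<lambda>(u::ennreal, p). Y'' u p) \<in> borel_measurable (borel \<Otimes>\<^sub>M optional_measure (space M) F) \<and>
        (\<exists>E. E \<in> sigma_sets (space M) (sigma_fun (space M) \<tau> \<union> Finf (space M) F) \<and>
             E \<in> sets M \<and> emeasure M E = 0 \<and>
             (\<forall>\<omega>\<in>space M - E. \<forall>t\<ge>0. (t, \<omega>) \<in> A \<longrightarrow>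
                Y (t, \<omega>) = (if ennreal t < \<tau> \<omega> then Y' (t, \<omega>) else Y'' (\<tau> \<omega>) (t, \<omega>)))))"

definition Lo :: "'a measure \<Rightarrow> (real \<Rightarrow> 'a set set) \<Rightarrow> ('a \<Rightarrow> ennreal) \<Rightarrow> (real \<times> 'a) set set" where
  "Lo M F \<tau> = {A. A \<in> optional_sets (space M) (Gfilt M F \<tau>) \<and>
     (\<forall>Y. Y \<in> borel_measurable (optional_measure (space M) (Gfilt M F \<tau>)) \<longrightarrow> splits_on M F \<tau> Y A)}"

definition stopping_time_wrt :: "'a set \<Rightarrow> (real \<Rightarrow> 'a set set) \<Rightarrow> ('a \<Rightarrow> ennreal) \<Rightarrow> bool" where
  "stopping_time_wrt \<Omega> G R \<longleftrightarrow> (\<forall>t\<ge>0. {\<omega>\<in>\<Omega>. R \<omega> \<le> ennreal t} \<in> G t)"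

definition stopped_sigma :: "'a set \<Rightarrow> (real \<Rightarrow> 'a set set) \<Rightarrow> ('a \<Rightarrow> ennreal) \<Rightarrow> 'a set set" where
  "stopped_sigma \<Omega> G R = {B \<in> Finf \<Omega> G. \<forall>t\<ge>0. B \<inter> {\<omega>\<in>\<Omega>. R \<omega> \<le> ennreal t} \<in> G t}"

definition random_time_sigma :: "'a set \<Rightarrow> (real \<Rightarrow> 'a set set) \<Rightarrow> ('a \<Rightarrow> ennreal) \<Rightarrow> 'a set set" where
  "random_time_sigma \<Omega> F R = sigma_sets \<Omega>
     {{\<omega>\<in>\<Omega>. (if R \<omega> < \<infinity> then X (enn2real (R \<omega>), \<omega>) else (0::real)) \<in> B} | X B.
        X \<in> borel_measurable (optional_measure \<Omega> F) \<and> B \<in> sets borel}"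

definition ndiv :: "ennreal \<Rightarrow> ennreal \<Rightarrow> ennreal" where
  "ndiv a b = (if a \<le> b then a else \<infinity>)"

definition graph_rt :: "'a set \<Rightarrow> ('a \<Rightarrow> ennreal) \<Rightarrow> (real \<times> 'a) set" where
  "graph_rt \<Omega> R = {(t, \<omega>). 0 \<le> t \<and> \<omega> \<in> \<Omega> \<and> R \<omega> = ennreal t}"

definition trace_on :: "'a set \<Rightarrow> 'a set set \<Rightarrow> 'a set set" where
  "trace_on D T = {D \<inter> B | B. B \<in> T}"

end

theory Submission
  imports Defs
begin

text \<open>Everything is governed by the point \<open>\<omega> \<mapsto> (\<tau> \<nmid> R, R, \<omega>)\<close> on \<open>{R < \<infinity>}\<close>.
  On the graph \<open>[R]\<close> the condition \<open>t < \<tau>\<close> says \<open>\<tau> \<nmid> R = \<infinity>\<close>, so a \<open>G\<close>-optional process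
  \<open>Y\<close> satisfies the splitting formula on \<open>[R]\<close> exactly when \<open>Y\<^sub>R\<close> is, off a null set, a
  \<open>B[0,\<infinity>] \<otimes> O(F)\<close>-measurable function of this point. Up to null sets, the traces on \<open>{R < \<infinity>}\<close> of
  \<open>N \<or> \<sigma>(\<tau> \<nmid> R) \<or> F\<^sub>R\<close> are the preimages of \<open>B[0,\<infinity>] \<otimes> O(F)\<close> under the point, and they always lie
  in \<open>G\<^sub>R\<close>. If \<open>[R] \<in> L\<^sup>o\<close>, splitting the indicator of \<open>[R\<^sub>B, \<infinity>)\<close> for \<open>B \<in> G\<^sub>R\<close> shows that \<open>B\<close>
  is such a preimage. Conversely, if the traces agree, the sampled indicators of \<open>G\<close>-optional sets
  are functions of the point, and a monotone class argument extends this to all \<open>G\<close>-optional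
  processes.\<close>

section \<open>Optional sets and processes\<close>

lemma less_top_if_le_ennreal [simp]: "x \<le> ennreal t \<Longrightarrow> x < \<top>"
  using ennreal_less_top le_less_trans by blast

lemma sets_optional_measure [simp]: "sets (optional_measure \<Omega> H) = optional_sets \<Omega> H"
proof -
  have gen: "{{p \<in> {0..} \<times> \<Omega>. X p \<in> B} |X B. cadlag_adapted \<Omega> H X \<and> B \<in> sets borel}
      \<subseteq> Pow ({0..} \<times> \<Omega>)"
    by auto
  then have "optional_sets \<Omega> H \<subseteq> Pow ({0..} \<times> \<Omega>)"
    unfolding optional_sets_def using sigma_sets_into_sp by blast
  then show ?thesis
    unfolding optional_measure_def
    using sigma_sets_sigma_sets_eq[OF gen] by (simp add: sets_measure_of optional_sets_def)
qed

lemma space_optional_measure [simp]: "space (optional_measure \<Omega> H) = {0..} \<times> \<Omega>"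
  unfolding optional_measure_def by (simp add: space_measure_of_conv)

lemma optional_setsI:
  "cadlag_adapted \<Omega> H X \<Longrightarrow> B \<in> sets borel \<Longrightarrow> {p \<in> {0..} \<times> \<Omega>. X p \<in> B} \<in> optional_sets \<Omega> H"
  unfolding optional_sets_def by (intro sigma_sets.Basic) blast

lemma optional_sets_vimage:
  assumes "Y \<in> borel_measurable (optional_measure \<Omega> H)" and "B \<in> sets borel"
  shows "{p \<in> {0..} \<times> \<Omega>. Y p \<in> B} \<in> optional_sets \<Omega> H"
proof -
  have "Y -` B \<inter> space (optional_measure \<Omega> H) \<in> sets (optional_measure \<Omega> H)"
    using assms by (rule measurable_sets)
  moreover have "Y -` B \<inter> space (optional_measure \<Omega> H) = {p \<in> {0..} \<times> \<Omega>. Y p \<in> B}"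
    by auto
  ultimately show ?thesis by simp
qed

lemma cadlag_adapted_optional_measurable:
  "cadlag_adapted \<Omega> H X \<Longrightarrow> X \<in> borel_measurable (optional_measure \<Omega> H)"
proof (rule measurableI)
  fix B :: "real set" assume "cadlag_adapted \<Omega> H X" "B \<in> sets borel"
  moreover have "X -` B \<inter> space (optional_measure \<Omega> H) = {p \<in> {0..} \<times> \<Omega>. X p \<in> B}"
    by auto
  ultimately show "X -` B \<inter> space (optional_measure \<Omega> H) \<in> sets (optional_measure \<Omega> H)"
    using optional_setsI by simp
qed auto

lemma optional_measurable_mono:
  fixes X :: "real \<times> 'a \<Rightarrow> real"
  assumes sub: "\<And>t. t \<ge> 0 \<Longrightarrow> H t \<subseteq> H' t"
    and X: "X \<in> borel_measurable (optional_measure \<Omega> H)"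
  shows "X \<in> borel_measurable (optional_measure \<Omega> H')"
proof (rule measurableI)
  have "optional_sets \<Omega> H \<subseteq> optional_sets \<Omega> H'"
    unfolding optional_sets_def
  proof (rule sigma_sets_mono', safe)
    fix Z :: "real \<times> 'a \<Rightarrow> real" and B :: "real set"
    assume "cadlag_adapted \<Omega> H Z" "B \<in> sets borel"
    moreover from this(1) have "cadlag_adapted \<Omega> H' Z"
      using sub unfolding cadlag_adapted_def by blast
    ultimately show "\<exists>X B'. {p \<in> {0..} \<times> \<Omega>. Z p \<in> B} = {p \<in> {0..} \<times> \<Omega>. X p \<in> B'}
        \<and> cadlag_adapted \<Omega> H' X \<and> B' \<in> sets borel"
      by blast
  qed
  then show "X -` B \<inter> space (optional_measure \<Omega> H') \<in> sets (optional_measure \<Omega> H')"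
    if "B \<in> sets borel" for B :: "real set"
    using measurable_sets[OF X that] by auto
qed auto

lemma borel_measurable_ndiv [measurable (raw)]:
  "f \<in> borel_measurable N \<Longrightarrow> g \<in> borel_measurable N \<Longrightarrow> (\<lambda>x. ndiv (f x) (g x)) \<in> borel_measurable N"
  unfolding ndiv_def by (rule measurable_If) (auto intro: borel_measurable_le)

lemma sigma_fun_subset_Pow: "sigma_fun \<Omega> f \<subseteq> Pow \<Omega>"
  unfolding sigma_fun_def by (rule, rule PowI, rule sigma_sets_into_sp[rotated]) auto

lemma sigma_funI: "B \<in> sets borel \<Longrightarrow> {\<omega> \<in> \<Omega>. f \<omega> \<in> B} \<in> sigma_fun \<Omega> f"
  unfolding sigma_fun_def by (intro sigma_sets.Basic) blast

lemma random_time_sigma_subset_Pow: "random_time_sigma \<Omega> H T \<subseteq> Pow \<Omega>"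
  unfolding random_time_sigma_def by (rule, rule PowI, rule sigma_sets_into_sp[rotated]) auto

lemma trace_onI: "B \<in> T \<Longrightarrow> D \<inter> B \<in> trace_on D T"
  unfolding trace_on_def by blast

lemma Int_sigma_sets_in:
  assumes S: "sigma_algebra \<Omega> S" and D: "D \<in> S"
    and gen: "\<And>a. a \<in> A \<Longrightarrow> D \<inter> a \<in> S" and X: "X \<in> sigma_sets \<Omega> A"
  shows "D \<inter> X \<in> S"
  using X
proof (induction rule: sigma_sets.induct)
  interpret S: sigma_algebra \<Omega> S by (rule S)
  {
    case (Basic a) then show ?case by (rule gen)
  next
    case Empty then show ?case by simp
  next
    case (Compl a)
    have "D \<inter> (\<Omega> - a) = D - D \<inter> a" using D S.sets_into_space by blast
    then show ?case using D Compl.IH by auto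
  next
    case (Union a)
    have "D \<inter> \<Union> (range a) = (\<Union>i. D \<inter> a i)" by blast
    also have "\<dots> \<in> S" using Union.IH by (intro S.countable_nat_UN) blast
    finally show ?case .
  }
qed

lemma tendsto_dyadic_ceiling: "(\<lambda>n. real_of_int \<lceil>2 ^ n * x\<rceil> / 2 ^ n) \<longlonglongrightarrow> x"
proof (rule tendsto_sandwich[where f="\<lambda>_. x" and h="\<lambda>n. x + inverse (2 ^ n)"])
  have "x \<le> real_of_int \<lceil>2 ^ n * x\<rceil> / 2 ^ n \<and> real_of_int \<lceil>2 ^ n * x\<rceil> / 2 ^ n \<le> x + inverse (2 ^ n)"
    for n :: nat
    using le_of_int_ceiling[of "2 ^ n * x"] of_int_ceiling_le_add_one[of "2 ^ n * x"]
    by (simp add: field_simps)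
  then show "\<forall>\<^sub>F n in sequentially. x \<le> real_of_int \<lceil>2 ^ n * x\<rceil> / 2 ^ n"
    and "\<forall>\<^sub>F n in sequentially. real_of_int \<lceil>2 ^ n * x\<rceil> / 2 ^ n \<le> x + inverse (2 ^ n)"
    by auto
  show "(\<lambda>n. x + inverse (2 ^ n)) \<longlonglongrightarrow> x"
    using tendsto_add[OF tendsto_const LIMSEQ_inverse_realpow_zero[of 2]] by simp
qed simp

lemma tendsto_step_at_right:
  assumes t: "t \<ge> 0"
  shows "((\<lambda>s. if a \<le> ennreal s then 1 else 0 :: real)
      \<longlongrightarrow> (if a \<le> ennreal t then 1 else 0)) (at_right t)"
proof (rule tendsto_eventually)
  show "\<forall>\<^sub>F s in at_right t. (if a \<le> ennreal s then 1 else 0 :: real) = (if a \<le> ennreal t then 1 else 0)"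
  proof (cases "a \<le> ennreal t")
    case True
    have "a \<le> ennreal s" if "t < s" for s
      using True that by (meson ennreal_leI less_imp_le order.trans)
    then show ?thesis using True by (intro eventually_at_rightI[where b="t + 1"]) auto
  next
    case False
    obtain b where b: "t < b" "ennreal b \<le> a"
    proof (cases a rule: ennreal_cases)
      case (real r)
      then show ?thesis using False t that[of r] by (simp add: ennreal_le_iff)
    next
      case top
      then show ?thesis using that[of "t + 1"] by simp
    qed
    have "\<not> a \<le> ennreal s" if "s < b" "t < s" for s
      using b that t by (meson ennreal_less_iff leD less_le_trans order.trans order_less_imp_le)
    then show ?thesis using False b by (intro eventually_at_rightI[where b=b]) auto
  qed
qed

lemma step_has_left_limit:
  assumes t: "0 < t"
  shows "\<exists>l. ((\<lambda>s. if a \<le> ennreal s then 1 else 0 :: real) \<longlongrightarrow> l) (at_left t)"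
proof (cases "a < ennreal t")
  case True
  then obtain r where r: "a = ennreal r" "0 \<le> r" "r < t"
    using t by (cases a rule: ennreal_cases) (auto simp: ennreal_less_iff)
  have "\<forall>\<^sub>F s in at_left t. (if a \<le> ennreal s then 1 else 0 :: real) = 1"
    using r by (intro eventually_at_leftI[where a=r]) (auto intro: ennreal_leI)
  then show ?thesis by (blast intro: tendsto_eventually)
next
  case False
  have "\<not> a \<le> ennreal s" if "s < t" for s
    using False that t by (meson ennreal_lessI le_less_trans leI)
  then have "\<forall>\<^sub>F s in at_left t. (if a \<le> ennreal s then 1 else 0 :: real) = 0"
    using t by (intro eventually_at_leftI[where a="t - 1"]) auto
  then show ?thesis by (blast intro: tendsto_eventually)
qed

definition indicator_after :: "('a \<Rightarrow> ennreal) \<Rightarrow> real \<times> 'a \<Rightarrow> real" where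
  "indicator_after T p = (if T (snd p) \<le> ennreal (fst p) then 1 else 0)"

definition time_since :: "('a \<Rightarrow> ennreal) \<Rightarrow> real \<times> 'a \<Rightarrow> real" where
  "time_since T p = (if T (snd p) = \<top> then 0 else max 0 (fst p - enn2real (T (snd p))))"

lemma continuous_time_since: "continuous (at t within A) (\<lambda>s. time_since T (s, \<omega>))"
  unfolding time_since_def by (cases "T \<omega> = \<top>") (auto intro!: continuous_intros)

section \<open>Stopping times of a filtration\<close>

locale filtration_sets =
  fixes \<Omega> :: "'a set" and G :: "real \<Rightarrow> 'a set set"
  assumes sigma_algebra_at: "t \<ge> 0 \<Longrightarrow> sigma_algebra \<Omega> (G t)"
    and mono_at: "0 \<le> s \<Longrightarrow> s \<le> t \<Longrightarrow> G s \<subseteq> G t"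
begin

definition at_measure :: "real \<Rightarrow> 'a measure" where
  "at_measure t = measure_of \<Omega> (G t) (\<lambda>_. 0)"

lemma space_at_measure [simp]: "space (at_measure t) = \<Omega>"
  unfolding at_measure_def by (simp add: space_measure_of_conv)

lemma sets_at_measure [simp]: "t \<ge> 0 \<Longrightarrow> sets (at_measure t) = G t"
  unfolding at_measure_def by (rule sigma_algebra.sets_measure_of_eq[OF sigma_algebra_at])

lemma subset_Pow_at: "t \<ge> 0 \<Longrightarrow> G t \<subseteq> Pow \<Omega>"
proof -
  assume "t \<ge> 0"
  then interpret sigma_algebra \<Omega> "G t" by (rule sigma_algebra_at)
  show ?thesis by (rule space_closed)
qed

lemma sigma_algebra_Finf: "sigma_algebra \<Omega> (Finf \<Omega> G)"
proof -
  have "(\<Union>t\<in>{0..}. G t) \<subseteq> Pow \<Omega>"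
    using subset_Pow_at by auto
  then show ?thesis unfolding Finf_def by (rule sigma_algebra_sigma_sets)
qed

lemma subset_Finf: "t \<ge> 0 \<Longrightarrow> G t \<subseteq> Finf \<Omega> G"
  unfolding Finf_def by (auto intro: sigma_sets.Basic)

lemma stopping_time_wrtD:
  "stopping_time_wrt \<Omega> G T \<Longrightarrow> t \<ge> 0 \<Longrightarrow> {\<omega> \<in> \<Omega>. T \<omega> \<le> ennreal t} \<in> G t"
  unfolding stopping_time_wrt_def by auto

lemma measurable_min_stopping_time:
  assumes T: "stopping_time_wrt \<Omega> G T" and t: "t \<ge> 0"
  shows "(\<lambda>\<omega>. min (T \<omega>) (ennreal t)) \<in> borel_measurable (at_measure t)"
proof (rule borel_measurableI_le)
  interpret Gt: sigma_algebra \<Omega> "G t" by (rule sigma_algebra_at[OF t])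
  fix y :: ennreal
  show "{\<omega> \<in> space (at_measure t). min (T \<omega>) (ennreal t) \<le> y} \<in> sets (at_measure t)"
  proof (cases "ennreal t \<le> y")
    case True
    then have "{\<omega> \<in> space (at_measure t). min (T \<omega>) (ennreal t) \<le> y} = \<Omega>"
      by (auto simp: min_le_iff_disj)
    then show ?thesis using t by simp
  next
    case False
    then obtain a where a: "y = ennreal a" "0 \<le> a" "a < t"
      using t by (cases y rule: ennreal_cases) (auto simp: ennreal_less_iff)
    have "{\<omega> \<in> space (at_measure t). min (T \<omega>) (ennreal t) \<le> y} = {\<omega> \<in> \<Omega>. T \<omega> \<le> ennreal a}"
      using False a by (auto simp: min_le_iff_disj)
    also have "\<dots> \<in> G a" using T a(2) by (rule stopping_time_wrtD)
    also have "G a \<subseteq> G t" using a by (intro mono_at) auto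
    finally show ?thesis using t by simp
  qed
qed

lemma measurable_ndiv_stopping_time:
  assumes T: "stopping_time_wrt \<Omega> G T" and t: "t \<ge> 0"
  shows "(\<lambda>\<omega>. ndiv (T \<omega>) (ennreal t)) \<in> borel_measurable (at_measure t)"
proof (rule borel_measurableI_le)
  interpret Gt: sigma_algebra \<Omega> "G t" by (rule sigma_algebra_at[OF t])
  fix y :: ennreal
  show "{\<omega> \<in> space (at_measure t). ndiv (T \<omega>) (ennreal t) \<le> y} \<in> sets (at_measure t)"
  proof (cases "y = top")
    case True
    then show ?thesis using t by simp
  next
    case False
    then obtain a where a: "y = ennreal a" "0 \<le> a" by (cases y rule: ennreal_cases) auto
    have "ennreal (min a t) = min (ennreal a) (ennreal t)"
      using a t by (cases "a \<le> t") (auto simp: min_def ennreal_le_iff)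
    then have "{\<omega> \<in> space (at_measure t). ndiv (T \<omega>) (ennreal t) \<le> y}
        = {\<omega> \<in> \<Omega>. T \<omega> \<le> ennreal (min a t)}"
      using a by (auto simp: ndiv_def top_unique)
    also have "\<dots> \<in> G (min a t)" using T a(2) t by (intro stopping_time_wrtD) auto
    also have "G (min a t) \<subseteq> G t" using a t by (intro mono_at) auto
    finally show ?thesis using t by simp
  qed
qed

lemma measurable_adapted_at:
  assumes X: "cadlag_adapted \<Omega> G X" and c: "0 \<le> c" "c \<le> t"
  shows "(\<lambda>\<omega>. X (c, \<omega>)) \<in> borel_measurable (at_measure t)"
proof (rule measurableI)
  fix A :: "real set" assume "A \<in> sets borel"
  then have "{\<omega> \<in> \<Omega>. X (c, \<omega>) \<in> A} \<in> G c" using X c unfolding cadlag_adapted_def by auto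
  moreover have "G c \<subseteq> G t" using c by (rule mono_at)
  moreover have "(\<lambda>\<omega>. X (c, \<omega>)) -` A \<inter> space (at_measure t) = {\<omega> \<in> \<Omega>. X (c, \<omega>) \<in> A}" by auto
  ultimately show "(\<lambda>\<omega>. X (c, \<omega>)) -` A \<inter> space (at_measure t) \<in> sets (at_measure t)"
    using c by auto
qed auto

text \<open>The process stopped at a stopping time is approximated from the right by its values at the
  dyadic times above, which are countably many measurable choices; right-continuity gives the limit.\<close>

lemma measurable_stopped_process:
  assumes X: "cadlag_adapted \<Omega> G X" and T: "stopping_time_wrt \<Omega> G T" and t: "t \<ge> 0"
  shows "(\<lambda>\<omega>. X (enn2real (min (T \<omega>) (ennreal t)), \<omega>)) \<in> borel_measurable (at_measure t)"
proof -
  define s where "s \<omega> = enn2real (min (T \<omega>) (ennreal t))" for \<omega>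
  have [measurable]: "(\<lambda>\<omega>. min (T \<omega>) (ennreal t)) \<in> borel_measurable (at_measure t)"
    using T t by (rule measurable_min_stopping_time)
  have [measurable]: "s \<in> borel_measurable (at_measure t)"
    unfolding s_def by measurable
  have s_bounds: "0 \<le> s \<omega>" "s \<omega> \<le> t" for \<omega>
    using enn2real_mono[of "min (T \<omega>) (ennreal t)" "ennreal t"] t unfolding s_def by auto
  define c where "c n k = max 0 (min t (real_of_int k / 2 ^ n))" for n :: nat and k :: int
  have "(\<lambda>\<omega>. X (c n \<lceil>2 ^ n * s \<omega>\<rceil>, \<omega>)) \<in> borel_measurable (at_measure t)" for n
  proof (rule measurable_compose_countable[where f="\<lambda>k \<omega>. X (c n k, \<omega>)"])
    show "(\<lambda>\<omega>. X (c n k, \<omega>)) \<in> borel_measurable (at_measure t)" for k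
      using X by (rule measurable_adapted_at) (auto simp: c_def t)
    show "(\<lambda>\<omega>. \<lceil>2 ^ n * s \<omega>\<rceil>) \<in> at_measure t \<rightarrow>\<^sub>M count_space UNIV"
      by measurable
  qed
  moreover have "(\<lambda>n. X (c n \<lceil>2 ^ n * s \<omega>\<rceil>, \<omega>)) \<longlonglongrightarrow> X (s \<omega>, \<omega>)" if "\<omega> \<in> \<Omega>" for \<omega>
  proof (rule continuous_within_tendsto_compose'[where f="\<lambda>u. X (u, \<omega>)" and S="{s \<omega>..}"])
    have "((\<lambda>u. X (u, \<omega>)) \<longlongrightarrow> X (s \<omega>, \<omega>)) (at_right (s \<omega>))"
      using X that s_bounds unfolding cadlag_adapted_def by auto
    then show "continuous (at (s \<omega>) within {s \<omega>..}) (\<lambda>u. X (u, \<omega>))"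
      by (simp add: continuous_within at_within_Ici_at_right)
    have "s \<omega> \<le> real_of_int \<lceil>2 ^ n * s \<omega>\<rceil> / 2 ^ n" for n :: nat
      using le_of_int_ceiling[of "2 ^ n * s \<omega>"] by (simp add: field_simps)
    then show "c n \<lceil>2 ^ n * s \<omega>\<rceil> \<in> {s \<omega>..}" for n
      unfolding c_def atLeast_iff using s_bounds[of \<omega>] by (intro max.coboundedI2 min.boundedI)
    have "(\<lambda>n. max 0 (min t (real_of_int \<lceil>2 ^ n * s \<omega>\<rceil> / 2 ^ n))) \<longlonglongrightarrow> max 0 (min t (s \<omega>))"
      by (intro tendsto_intros tendsto_dyadic_ceiling)
    then show "(\<lambda>n. c n \<lceil>2 ^ n * s \<omega>\<rceil>) \<longlonglongrightarrow> s \<omega>"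
      using s_bounds[of \<omega>] by (simp add: c_def)
  qed
  ultimately show ?thesis
    unfolding s_def[symmetric] by (rule borel_measurable_LIMSEQ_metric) simp
qed

lemma sigma_algebra_stopped_sigma:
  assumes T: "stopping_time_wrt \<Omega> G T"
  shows "sigma_algebra \<Omega> (stopped_sigma \<Omega> G T)"
  unfolding sigma_algebra_iff2
proof (intro conjI allI impI ballI)
  interpret GF: sigma_algebra \<Omega> "Finf \<Omega> G" by (rule sigma_algebra_Finf)
  show "stopped_sigma \<Omega> G T \<subseteq> Pow \<Omega>"
    unfolding stopped_sigma_def using GF.space_closed by auto
  show "{} \<in> stopped_sigma \<Omega> G T"
    unfolding stopped_sigma_def
  proof (intro CollectI conjI allI impI)
    fix t :: real assume "t \<ge> 0"
    then interpret Gt: sigma_algebra \<Omega> "G t" by (rule sigma_algebra_at)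
    show "{} \<inter> {\<omega> \<in> \<Omega>. T \<omega> \<le> ennreal t} \<in> G t" by simp
  qed simp
  show "\<Omega> - B \<in> stopped_sigma \<Omega> G T" if B: "B \<in> stopped_sigma \<Omega> G T" for B
    unfolding stopped_sigma_def
  proof (intro CollectI conjI allI impI)
    show "\<Omega> - B \<in> Finf \<Omega> G" using B unfolding stopped_sigma_def by auto
    fix t :: real assume t: "t \<ge> 0"
    interpret Gt: sigma_algebra \<Omega> "G t" by (rule sigma_algebra_at[OF t])
    have "(\<Omega> - B) \<inter> {\<omega> \<in> \<Omega>. T \<omega> \<le> ennreal t}
        = {\<omega> \<in> \<Omega>. T \<omega> \<le> ennreal t} - B \<inter> {\<omega> \<in> \<Omega>. T \<omega> \<le> ennreal t}"
      by auto
    also have "\<dots> \<in> G t"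
      using stopping_time_wrtD[OF T t] B t unfolding stopped_sigma_def by auto
    finally show "(\<Omega> - B) \<inter> {\<omega> \<in> \<Omega>. T \<omega> \<le> ennreal t} \<in> G t" .
  qed
  show "\<Union> (range A) \<in> stopped_sigma \<Omega> G T" if A: "range A \<subseteq> stopped_sigma \<Omega> G T"
    for A :: "nat \<Rightarrow> 'a set"
    unfolding stopped_sigma_def
  proof (intro CollectI conjI allI impI)
    show "\<Union> (range A) \<in> Finf \<Omega> G" using A unfolding stopped_sigma_def by auto
    fix t :: real assume t: "t \<ge> 0"
    interpret Gt: sigma_algebra \<Omega> "G t" by (rule sigma_algebra_at[OF t])
    have "\<Union> (range A) \<inter> {\<omega> \<in> \<Omega>. T \<omega> \<le> ennreal t} = (\<Union>i. A i \<inter> {\<omega> \<in> \<Omega>. T \<omega> \<le> ennreal t})"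
      by auto
    also have "\<dots> \<in> G t"
      using A t unfolding stopped_sigma_def by (intro Gt.countable_nat_UN) auto
    finally show "\<Union> (range A) \<inter> {\<omega> \<in> \<Omega>. T \<omega> \<le> ennreal t} \<in> G t" .
  qed
qed

text \<open>Membership in the ambient sigma-algebra comes for free on the set where the stopping time
  is finite, since that set is the countable union of the sets where it is at most n.\<close>

lemma stopped_sigmaI:
  assumes A: "A \<subseteq> {\<omega> \<in> \<Omega>. T \<omega> < \<infinity>}"
    and At: "\<And>t. t \<ge> 0 \<Longrightarrow> A \<inter> {\<omega> \<in> \<Omega>. T \<omega> \<le> ennreal t} \<in> G t"
  shows "A \<in> stopped_sigma \<Omega> G T"
  unfolding stopped_sigma_def
proof (intro CollectI conjI allI impI At)
  interpret GF: sigma_algebra \<Omega> "Finf \<Omega> G" by (rule sigma_algebra_Finf)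
  have "A = (\<Union>n. A \<inter> {\<omega> \<in> \<Omega>. T \<omega> \<le> ennreal (real n)})"
  proof (intro equalityI subsetI)
    fix \<omega> assume \<omega>: "\<omega> \<in> A"
    then obtain r where r: "T \<omega> = ennreal r" "\<omega> \<in> \<Omega>"
      using A by (cases "T \<omega>" rule: ennreal_cases) auto
    obtain n where "r \<le> real n" using real_arch_simple by blast
    then show "\<omega> \<in> (\<Union>n. A \<inter> {\<omega> \<in> \<Omega>. T \<omega> \<le> ennreal (real n)})"
      using \<omega> r by (auto intro: ennreal_leI)
  qed auto
  also have "\<dots> \<in> Finf \<Omega> G"
  proof (intro GF.countable_nat_UN image_subsetI)
    show "A \<inter> {\<omega> \<in> \<Omega>. T \<omega> \<le> ennreal (real n)} \<in> Finf \<Omega> G" for n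
      using At[of "real n"] subset_Finf[of "real n"] by auto
  qed
  finally show "A \<in> Finf \<Omega> G" .
qed

lemma finite_set_stopped_sigma:
  assumes T: "stopping_time_wrt \<Omega> G T"
  shows "{\<omega> \<in> \<Omega>. T \<omega> < \<infinity>} \<in> stopped_sigma \<Omega> G T"
proof (rule stopped_sigmaI)
  fix t :: real assume "t \<ge> 0"
  moreover have "{\<omega> \<in> \<Omega>. T \<omega> < \<infinity>} \<inter> {\<omega> \<in> \<Omega>. T \<omega> \<le> ennreal t} = {\<omega> \<in> \<Omega>. T \<omega> \<le> ennreal t}"
    using ennreal_less_top le_less_trans by auto
  ultimately show "{\<omega> \<in> \<Omega>. T \<omega> < \<infinity>} \<inter> {\<omega> \<in> \<Omega>. T \<omega> \<le> ennreal t} \<in> G t"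
    using stopping_time_wrtD[OF T] by simp
qed auto

lemma Int_finite_set_stopped_sigma:
  assumes T: "stopping_time_wrt \<Omega> G T"
    and gen: "\<And>a. a \<in> A \<Longrightarrow> {\<omega> \<in> \<Omega>. T \<omega> < \<infinity>} \<inter> a \<in> stopped_sigma \<Omega> G T"
    and X: "X \<in> sigma_sets \<Omega> A"
  shows "{\<omega> \<in> \<Omega>. T \<omega> < \<infinity>} \<inter> X \<in> stopped_sigma \<Omega> G T"
  using sigma_algebra_stopped_sigma[OF T] finite_set_stopped_sigma[OF T] gen X
  by (rule Int_sigma_sets_in)

lemma cadlag_sampled_stopped_sigma:
  assumes X: "cadlag_adapted \<Omega> G X" and T: "stopping_time_wrt \<Omega> G T" and B: "B \<in> sets borel"
  shows "{\<omega> \<in> \<Omega>. T \<omega> < \<infinity> \<and> X (enn2real (T \<omega>), \<omega>) \<in> B} \<in> stopped_sigma \<Omega> G T"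
proof (rule stopped_sigmaI)
  fix t :: real assume t: "t \<ge> 0"
  interpret Gt: sigma_algebra \<Omega> "G t" by (rule sigma_algebra_at[OF t])
  have "(\<lambda>\<omega>. X (enn2real (min (T \<omega>) (ennreal t)), \<omega>)) -` B \<inter> space (at_measure t)
      \<in> sets (at_measure t)"
    using measurable_stopped_process[OF X T t] B by (rule measurable_sets)
  then have "{\<omega> \<in> \<Omega>. X (enn2real (min (T \<omega>) (ennreal t)), \<omega>) \<in> B} \<in> G t"
    using t by (simp add: vimage_def Int_def conj_commute)
  moreover have "{\<omega> \<in> \<Omega>. T \<omega> < \<infinity> \<and> X (enn2real (T \<omega>), \<omega>) \<in> B} \<inter> {\<omega> \<in> \<Omega>. T \<omega> \<le> ennreal t}
      = {\<omega> \<in> \<Omega>. T \<omega> \<le> ennreal t} \<inter> {\<omega> \<in> \<Omega>. X (enn2real (min (T \<omega>) (ennreal t)), \<omega>) \<in> B}"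
    using ennreal_less_top le_less_trans by (auto simp: min_absorb1)
  ultimately show "{\<omega> \<in> \<Omega>. T \<omega> < \<infinity> \<and> X (enn2real (T \<omega>), \<omega>) \<in> B} \<inter> {\<omega> \<in> \<Omega>. T \<omega> \<le> ennreal t}
      \<in> G t"
    using stopping_time_wrtD[OF T t] by auto
qed auto

lemma optional_sampled_stopped_sigma:
  assumes T: "stopping_time_wrt \<Omega> G T" and A: "A \<in> optional_sets \<Omega> G"
  shows "{\<omega> \<in> \<Omega>. T \<omega> < \<infinity> \<and> (enn2real (T \<omega>), \<omega>) \<in> A} \<in> stopped_sigma \<Omega> G T"
  using A unfolding optional_sets_def
proof (induction rule: sigma_sets.induct)
  interpret GT: sigma_algebra \<Omega> "stopped_sigma \<Omega> G T" by (rule sigma_algebra_stopped_sigma[OF T])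
  {
    case (Basic a)
    then obtain X B where a: "a = {p \<in> {0..} \<times> \<Omega>. X p \<in> B}"
      and X: "cadlag_adapted \<Omega> G X" and B: "B \<in> sets borel"
      by blast
    have "{\<omega> \<in> \<Omega>. T \<omega> < \<infinity> \<and> (enn2real (T \<omega>), \<omega>) \<in> a}
        = {\<omega> \<in> \<Omega>. T \<omega> < \<infinity> \<and> X (enn2real (T \<omega>), \<omega>) \<in> B}"
      using a by auto
    then show ?case using cadlag_sampled_stopped_sigma[OF X T B] by simp
  next
    case Empty
    then show ?case by simp
  next
    case (Compl a)
    have "{\<omega> \<in> \<Omega>. T \<omega> < \<infinity> \<and> (enn2real (T \<omega>), \<omega>) \<in> {0..} \<times> \<Omega> - a}
        = {\<omega> \<in> \<Omega>. T \<omega> < \<infinity>} - {\<omega> \<in> \<Omega>. T \<omega> < \<infinity> \<and> (enn2real (T \<omega>), \<omega>) \<in> a}"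
      by auto
    then show ?case using finite_set_stopped_sigma[OF T] Compl.IH by auto
  next
    case (Union a)
    have "{\<omega> \<in> \<Omega>. T \<omega> < \<infinity> \<and> (enn2real (T \<omega>), \<omega>) \<in> \<Union> (range a)}
        = (\<Union>i. {\<omega> \<in> \<Omega>. T \<omega> < \<infinity> \<and> (enn2real (T \<omega>), \<omega>) \<in> a i})"
      by auto
    also have "\<dots> \<in> stopped_sigma \<Omega> G T" using Union.IH by (intro GT.countable_nat_UN) blast
    finally show ?case .
  }
qed

lemma cadlag_adapted_indicator_after:
  assumes T: "stopping_time_wrt \<Omega> G T"
  shows "cadlag_adapted \<Omega> G (indicator_after T)"
  unfolding cadlag_adapted_def
proof (intro conjI allI impI ballI)
  fix t :: real and B :: "real set" assume t: "t \<ge> 0"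
  interpret Gt: sigma_algebra \<Omega> "G t" by (rule sigma_algebra_at[OF t])
  have "{\<omega> \<in> \<Omega>. indicator_after T (t, \<omega>) \<in> B}
      = (if 1 \<in> B then {\<omega> \<in> \<Omega>. T \<omega> \<le> ennreal t} else {})
        \<union> (if 0 \<in> B then \<Omega> - {\<omega> \<in> \<Omega>. T \<omega> \<le> ennreal t} else {})"
    by (auto simp: indicator_after_def)
  then show "{\<omega> \<in> \<Omega>. indicator_after T (t, \<omega>) \<in> B} \<in> G t"
    using stopping_time_wrtD[OF T t] by auto
next
  fix \<omega> and t :: real assume "t \<ge> 0"
  then show "((\<lambda>s. indicator_after T (s, \<omega>)) \<longlongrightarrow> indicator_after T (t, \<omega>)) (at_right t)"
    unfolding indicator_after_def by (simp add: tendsto_step_at_right)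
  assume "0 < t"
  then show "\<exists>l. ((\<lambda>s. indicator_after T (s, \<omega>)) \<longlongrightarrow> l) (at_left t)"
    unfolding indicator_after_def by (simp add: step_has_left_limit)
qed

lemma cadlag_adapted_time_since:
  assumes T: "stopping_time_wrt \<Omega> G T"
  shows "cadlag_adapted \<Omega> G (time_since T)"
  unfolding cadlag_adapted_def
proof (intro conjI allI impI ballI)
  fix t :: real and B :: "real set" assume t: "t \<ge> 0" and B: "B \<in> sets borel"
  have eq: "time_since T (t, \<omega>) = t - enn2real (min (T \<omega>) (ennreal t))" for \<omega>
  proof (cases "T \<omega>" rule: ennreal_cases)
    case (real r)
    then have "min (T \<omega>) (ennreal t) = ennreal (min r t)"
      using t by (cases "r \<le> t") (auto simp: min_def ennreal_le_iff)
    then show ?thesis using real t by (auto simp: time_since_def max_def min_def)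
  next
    case top
    then show ?thesis using t by (simp add: time_since_def)
  qed
  have "(\<lambda>x. t - enn2real x) \<in> borel_measurable borel"
    by measurable
  with measurable_min_stopping_time[OF T t]
  have "(\<lambda>\<omega>. t - enn2real (min (T \<omega>) (ennreal t))) \<in> borel_measurable (at_measure t)"
    by (rule measurable_compose)
  then have "(\<lambda>\<omega>. t - enn2real (min (T \<omega>) (ennreal t))) -` B \<inter> space (at_measure t) \<in> sets (at_measure t)"
    using B by (rule measurable_sets)
  then show "{\<omega> \<in> \<Omega>. time_since T (t, \<omega>) \<in> B} \<in> G t"
    using t by (simp add: eq vimage_def Int_def conj_commute)
next
  fix \<omega> and t :: real
  show "((\<lambda>s. time_since T (s, \<omega>)) \<longlongrightarrow> time_since T (t, \<omega>)) (at_right t)"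
    using continuous_time_since by (simp add: continuous_within)
  show "\<exists>l. ((\<lambda>s. time_since T (s, \<omega>)) \<longlongrightarrow> l) (at_left t)"
    using continuous_time_since[of t "{..<t}" T \<omega>] unfolding continuous_within by blast
qed

text \<open>The graph is where the process \<open>1[T,\<infinity>)\<close> equals 1 and \<open>(t - T)\<^sup>+\<close> vanishes.\<close>

lemma graph_rt_optional:
  assumes T: "stopping_time_wrt \<Omega> G T"
  shows "graph_rt \<Omega> T \<in> optional_sets \<Omega> G"
proof -
  interpret O: sigma_algebra "{0..} \<times> \<Omega>" "optional_sets \<Omega> G"
    using sets.sigma_algebra_axioms[of "optional_measure \<Omega> G"] by simp
  have "graph_rt \<Omega> T = {p \<in> {0..} \<times> \<Omega>. indicator_after T p \<in> {1}}
      \<inter> {p \<in> {0..} \<times> \<Omega>. time_since T p \<in> {0}}"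
  proof (intro equalityI subsetI)
    fix p assume "p \<in> graph_rt \<Omega> T"
    then show "p \<in> {p \<in> {0..} \<times> \<Omega>. indicator_after T p \<in> {1}} \<inter> {p \<in> {0..} \<times> \<Omega>. time_since T p \<in> {0}}"
      by (auto simp: graph_rt_def indicator_after_def time_since_def)
  next
    fix p assume p: "p \<in> {p \<in> {0..} \<times> \<Omega>. indicator_after T p \<in> {1}} \<inter> {p \<in> {0..} \<times> \<Omega>. time_since T p \<in> {0}}"
    obtain t \<omega> where "p = (t, \<omega>)" by (cases p)
    with p obtain r where "t \<ge> 0" "\<omega> \<in> \<Omega>" "T \<omega> = ennreal r" "0 \<le> r" "r \<le> t" "max 0 (t - r) = 0"
      by (cases "T \<omega>" rule: ennreal_cases)
        (auto simp: indicator_after_def time_since_def top_unique split: if_splits)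
    then show "p \<in> graph_rt \<Omega> T"
      using \<open>p = (t, \<omega>)\<close> by (auto simp: graph_rt_def max_def split: if_splits)
  qed
  also have "\<dots> \<in> optional_sets \<Omega> G"
    using optional_setsI[OF cadlag_adapted_indicator_after[OF T], of "{1}"]
      optional_setsI[OF cadlag_adapted_time_since[OF T], of "{0}"] by (intro O.Int) auto
  finally show ?thesis .
qed

lemma ndiv_finite_stopped_sigma:
  assumes S: "stopping_time_wrt \<Omega> G S" and T: "stopping_time_wrt \<Omega> G T"
    and B: "B \<in> sets borel"
  shows "{\<omega> \<in> \<Omega>. T \<omega> < \<infinity>} \<inter> {\<omega> \<in> \<Omega>. ndiv (S \<omega>) (T \<omega>) \<in> B} \<in> stopped_sigma \<Omega> G T"
proof (rule stopped_sigmaI)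
  fix t :: real assume t: "t \<ge> 0"
  interpret Gt: sigma_algebra \<Omega> "G t" by (rule sigma_algebra_at[OF t])
  have m1: "(\<lambda>\<omega>. ndiv (S \<omega>) (ennreal t)) \<in> borel_measurable (at_measure t)"
    using S t by (rule measurable_ndiv_stopping_time)
  have m2: "(\<lambda>\<omega>. min (T \<omega>) (ennreal t)) \<in> borel_measurable (at_measure t)"
    using T t by (rule measurable_min_stopping_time)
  have "(\<lambda>\<omega>. ndiv (ndiv (S \<omega>) (ennreal t)) (min (T \<omega>) (ennreal t))) -` B
      \<inter> space (at_measure t) \<in> sets (at_measure t)"
    using borel_measurable_ndiv[OF m1 m2] B by (rule measurable_sets)
  then have "{\<omega> \<in> \<Omega>. ndiv (ndiv (S \<omega>) (ennreal t)) (min (T \<omega>) (ennreal t)) \<in> B} \<in> G t"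
    using t by (simp add: vimage_def Int_def conj_commute)
  moreover
  txt \<open>On \<open>{T \<le> t}\<close> the value \<open>S \<nmid> T\<close> is already determined by \<open>S \<nmid> t\<close> and \<open>min T t\<close>.\<close>
  have "ndiv (S \<omega>) (T \<omega>) = ndiv (ndiv (S \<omega>) (ennreal t)) (min (T \<omega>) (ennreal t))"
    if "T \<omega> \<le> ennreal t" for \<omega>
    using that by (cases "S \<omega> \<le> T \<omega>"; cases "S \<omega> \<le> ennreal t")
      (auto simp: ndiv_def min_absorb1 top_unique dest: order.trans)
  then have "{\<omega> \<in> \<Omega>. T \<omega> < \<infinity>} \<inter> {\<omega> \<in> \<Omega>. ndiv (S \<omega>) (T \<omega>) \<in> B} \<inter> {\<omega> \<in> \<Omega>. T \<omega> \<le> ennreal t}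
      = {\<omega> \<in> \<Omega>. T \<omega> \<le> ennreal t}
        \<inter> {\<omega> \<in> \<Omega>. ndiv (ndiv (S \<omega>) (ennreal t)) (min (T \<omega>) (ennreal t)) \<in> B}"
    by auto
  ultimately show "{\<omega> \<in> \<Omega>. T \<omega> < \<infinity>} \<inter> {\<omega> \<in> \<Omega>. ndiv (S \<omega>) (T \<omega>) \<in> B}
      \<inter> {\<omega> \<in> \<Omega>. T \<omega> \<le> ennreal t} \<in> G t"
    using Gt.Int[OF stopping_time_wrtD[OF T t]] by simp
qed auto

lemma stopping_time_restrict:
  assumes B: "B \<in> stopped_sigma \<Omega> G T"
  shows "stopping_time_wrt \<Omega> G (\<lambda>\<omega>. if \<omega> \<in> B then T \<omega> else \<infinity>)"
  unfolding stopping_time_wrt_def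
proof (intro allI impI)
  fix t :: real assume "t \<ge> 0"
  moreover have "{\<omega> \<in> \<Omega>. (if \<omega> \<in> B then T \<omega> else \<infinity>) \<le> ennreal t} = B \<inter> {\<omega> \<in> \<Omega>. T \<omega> \<le> ennreal t}"
    by (auto simp: top_unique)
  ultimately show "{\<omega> \<in> \<Omega>. (if \<omega> \<in> B then T \<omega> else \<infinity>) \<le> ennreal t} \<in> G t"
    using B unfolding stopped_sigma_def by auto
qed

end

lemma usual_filtration_imp_filtration_sets:
  "usual_filtration M F \<Longrightarrow> filtration_sets (space M) F"
  unfolding usual_filtration_def filtration_sets_def by blast

section \<open>The progressively enlarged filtration\<close>

locale progressive_enlargement =
  fixes M :: "'a measure" and F :: "real \<Rightarrow> 'a set set" and \<tau> :: "'a \<Rightarrow> ennreal"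
  assumes filtration_F: "filtration_sets (space M) F"
begin

abbreviation \<Omega> where "\<Omega> \<equiv> space M"
abbreviation G where "G \<equiv> Gfilt M F \<tau>"
abbreviation tau_Finf where "tau_Finf \<equiv> sigma_sets \<Omega> (sigma_fun \<Omega> \<tau> \<union> Finf \<Omega> F)"
abbreviation null_gen where
  "null_gen \<equiv> {D. D \<subseteq> \<Omega> \<and> (\<exists>E\<in>tau_Finf. E \<in> null_sets M \<and> D \<subseteq> E)}"

lemma Nsig_eq: "Nsig M F \<tau> = sigma_sets \<Omega> null_gen"
  unfolding Nsig_def null_sigma_def null_sets_def by (rule arg_cong[where f="sigma_sets \<Omega>"]) auto

lemma Nsig_subset_Pow: "Nsig M F \<tau> \<subseteq> Pow \<Omega>"
  unfolding Nsig_eq by (rule, rule PowI, rule sigma_sets_into_sp[rotated]) auto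

lemma F_subset_Pow: "t \<ge> 0 \<Longrightarrow> F t \<subseteq> Pow \<Omega>"
  by (rule filtration_sets.subset_Pow_at[OF filtration_F])

lemma Gfilt_eq: "G t = sigma_sets \<Omega> (Nsig M F \<tau> \<union>
    (\<Inter>s\<in>{t<..}. sigma_sets \<Omega> (F s \<union> sigma_fun \<Omega> (\<lambda>\<omega>. min (\<tau> \<omega>) (ennreal s)))))"
  unfolding Gfilt_def ..

sublocale filtration_sets \<Omega> G
proof (rule filtration_sets.intro)
  show "sigma_algebra \<Omega> (G t)" if t: "t \<ge> 0" for t :: real
  proof -
    have "(\<Inter>s\<in>{t<..}. sigma_sets \<Omega> (F s \<union> sigma_fun \<Omega> (\<lambda>\<omega>. min (\<tau> \<omega>) (ennreal s))))
        \<subseteq> sigma_sets \<Omega> (F (t + 1) \<union> sigma_fun \<Omega> (\<lambda>\<omega>. min (\<tau> \<omega>) (ennreal (t + 1))))"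
      by (rule INT_lower) simp
    also have "\<dots> \<subseteq> Pow \<Omega>"
    proof -
      have Fp: "F (t + 1) \<subseteq> Pow \<Omega>" using t by (intro F_subset_Pow) simp
      show ?thesis
        using sigma_sets_into_sp[OF Un_least[OF Fp sigma_fun_subset_Pow]] by blast
    qed
    finally show ?thesis
      unfolding Gfilt_eq using Nsig_subset_Pow by (intro sigma_algebra_sigma_sets) auto
  qed
  show "G s \<subseteq> G t" if "0 \<le> s" "s \<le> t" for s t :: real
    unfolding Gfilt_eq using that by (intro sigma_sets_mono') auto
qed

lemma Nsig_subset_Gfilt: "Nsig M F \<tau> \<subseteq> G t"
  unfolding Gfilt_eq by auto

lemma F_subset_Gfilt: "t \<ge> 0 \<Longrightarrow> F t \<subseteq> G t"
proof -
  assume t: "t \<ge> 0"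
  have "F t \<subseteq> sigma_sets \<Omega> (F s \<union> sigma_fun \<Omega> (\<lambda>\<omega>. min (\<tau> \<omega>) (ennreal s)))" if "t < s" for s
    using filtration_sets.mono_at[OF filtration_F t, of s] that by auto
  then have "F t \<subseteq> (\<Inter>s\<in>{t<..}. sigma_sets \<Omega> (F s \<union> sigma_fun \<Omega> (\<lambda>\<omega>. min (\<tau> \<omega>) (ennreal s))))"
    by (intro INT_greatest) simp
  then show ?thesis unfolding Gfilt_eq by (meson UnI2 sigma_sets.Basic subset_iff)
qed

lemma stopping_time_tau: "stopping_time_wrt \<Omega> G \<tau>"
  unfolding stopping_time_wrt_def
proof (intro allI impI)
  fix t :: real assume t: "t \<ge> 0"
  have tau_le: "{\<omega> \<in> \<Omega>. \<tau> \<omega> \<le> ennreal t}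
      \<in> sigma_sets \<Omega> (F s \<union> sigma_fun \<Omega> (\<lambda>\<omega>. min (\<tau> \<omega>) (ennreal s)))"
    if "t < s" for s
  proof -
    have "ennreal t < ennreal s" using that t by (simp add: ennreal_less_iff)
    then have "{\<omega> \<in> \<Omega>. \<tau> \<omega> \<le> ennreal t} = {\<omega> \<in> \<Omega>. min (\<tau> \<omega>) (ennreal s) \<in> {..ennreal t}}"
      by (auto simp: min_le_iff_disj)
    also have "\<dots> \<in> sigma_fun \<Omega> (\<lambda>\<omega>. min (\<tau> \<omega>) (ennreal s))"
      by (rule sigma_funI) simp
    finally show ?thesis by (meson UnI2 sigma_sets.Basic)
  qed
  show "{\<omega> \<in> \<Omega>. \<tau> \<omega> \<le> ennreal t} \<in> G t"
    unfolding Gfilt_eq by (rule sigma_sets.Basic, rule UnI2, rule INT_I, rule tau_le) simp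
qed

lemma Nsig_subset_stopped_sigma:
  assumes R: "stopping_time_wrt \<Omega> G R"
  shows "Nsig M F \<tau> \<subseteq> stopped_sigma \<Omega> G R"
  unfolding stopped_sigma_def
proof (intro subsetI CollectI conjI allI impI)
  fix a assume a: "a \<in> Nsig M F \<tau>"
  then show "a \<in> Finf \<Omega> G" using Nsig_subset_Gfilt subset_Finf[of 0] by auto
  fix t :: real assume t: "t \<ge> 0"
  interpret Gt: sigma_algebra \<Omega> "G t" by (rule sigma_algebra_at[OF t])
  show "a \<inter> {\<omega> \<in> \<Omega>. R \<omega> \<le> ennreal t} \<in> G t"
    using a Nsig_subset_Gfilt stopping_time_wrtD[OF R t] by (intro Gt.Int) auto
qed

lemma F_optional_imp_G_optional:
  fixes X :: "real \<times> 'a \<Rightarrow> real"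
  shows "X \<in> borel_measurable (optional_measure \<Omega> F) \<Longrightarrow> X \<in> borel_measurable (optional_measure \<Omega> G)"
  by (rule optional_measurable_mono[OF F_subset_Gfilt])

lemma sigma_sets_Nsig_ae_eq:
  assumes A: "A \<in> sigma_sets \<Omega> (Nsig M F \<tau> \<union> C)"
  shows "\<exists>A'\<in>sigma_sets \<Omega> C. \<exists>E. E \<in> tau_Finf \<and> E \<in> null_sets M \<and> A - E = A' - E"
proof -
  have "sigma_sets \<Omega> (Nsig M F \<tau> \<union> C) \<subseteq> sigma_sets \<Omega> (null_gen \<union> C)"
  proof (rule sigma_sets_mono)
    have "Nsig M F \<tau> \<subseteq> sigma_sets \<Omega> (null_gen \<union> C)"
      unfolding Nsig_eq by (rule sigma_sets_mono') auto
    then show "Nsig M F \<tau> \<union> C \<subseteq> sigma_sets \<Omega> (null_gen \<union> C)" by auto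
  qed
  with A have "A \<in> sigma_sets \<Omega> (null_gen \<union> C)" by blast
  then show ?thesis
  proof (induction rule: sigma_sets.induct)
    case (Basic a)
    then show ?case
    proof
      assume "a \<in> null_gen"
      then obtain E where "E \<in> tau_Finf" "E \<in> null_sets M" "a \<subseteq> E" by blast
      then show ?thesis by (intro bexI[of _ "{}"]) (auto intro: sigma_sets.Empty)
    next
      assume "a \<in> C"
      then show ?thesis by (intro bexI[of _ a] exI[of _ "{}"]) (auto intro: sigma_sets.Empty)
    qed
  next
    case Empty
    then show ?case by (intro bexI[of _ "{}"] exI[of _ "{}"]) (auto intro: sigma_sets.Empty)
  next
    case (Compl a)
    then obtain A' E where "A' \<in> sigma_sets \<Omega> C" "E \<in> tau_Finf" "E \<in> null_sets M" "a - E = A' - E"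
      by blast
    then show ?case by (intro bexI[of _ "\<Omega> - A'"] exI[of _ E]) (auto intro: sigma_sets.Compl)
  next
    case (Union a)
    then have "\<forall>i. \<exists>A'. A' \<in> sigma_sets \<Omega> C
        \<and> (\<exists>E. E \<in> tau_Finf \<and> E \<in> null_sets M \<and> a i - E = A' - E)"
      by blast
    then obtain A' where A': "\<And>i. A' i \<in> sigma_sets \<Omega> C"
      and "\<And>i. \<exists>E. E \<in> tau_Finf \<and> E \<in> null_sets M \<and> a i - E = A' i - E"
      by metis
    then obtain E where E: "\<And>i. E i \<in> tau_Finf" "\<And>i. E i \<in> null_sets M"
      "\<And>i. a i - E i = A' i - E i"
      by metis
    have "(\<Union>i. E i) \<in> tau_Finf" using E(1) by (rule sigma_sets.Union)
    moreover have "(\<Union>i. E i) \<in> null_sets M" using E(2) by (rule null_sets_UN)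
    moreover have "(\<Union>i. A' i) \<in> sigma_sets \<Omega> C" using A' by (rule sigma_sets.Union)
    moreover have "\<Union> (range a) - (\<Union>i. E i) = (\<Union>i. A' i) - (\<Union>i. E i)"
      using E(3) by blast
    ultimately show ?case by blast
  qed
qed

lemma null_subset_Nsig:
  assumes "D \<subseteq> E" and "E \<in> tau_Finf" and "E \<in> null_sets M"
  shows "D \<in> Nsig M F \<tau>"
proof -
  have "E \<subseteq> \<Omega>" using assms(3) by (rule null_sets.sets_into_space)
  then show ?thesis
    unfolding Nsig_eq using assms by (intro sigma_sets.Basic) blast
qed

section \<open>Splitting on the graph of a stopping time\<close>

abbreviation split_space :: "(ennreal \<times> real \<times> 'a) measure" where
  "split_space \<equiv> borel \<Otimes>\<^sub>M optional_measure \<Omega> F"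

definition split_point :: "('a \<Rightarrow> ennreal) \<Rightarrow> 'a \<Rightarrow> ennreal \<times> real \<times> 'a" where
  "split_point R \<omega> = (ndiv (\<tau> \<omega>) (R \<omega>), enn2real (R \<omega>), \<omega>)"

abbreviation split_gen :: "('a \<Rightarrow> ennreal) \<Rightarrow> 'a set set" where
  "split_gen R \<equiv> sigma_fun \<Omega> (\<lambda>\<omega>. ndiv (\<tau> \<omega>) (R \<omega>)) \<union> random_time_sigma \<Omega> F R"

abbreviation split_sigma :: "('a \<Rightarrow> ennreal) \<Rightarrow> 'a set set" where
  "split_sigma R \<equiv> sigma_sets \<Omega> (Nsig M F \<tau> \<union> sigma_fun \<Omega> (\<lambda>\<omega>. ndiv (\<tau> \<omega>) (R \<omega>))
    \<union> random_time_sigma \<Omega> F R)"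

lemma split_point_space: "\<omega> \<in> \<Omega> \<Longrightarrow> split_point R \<omega> \<in> space split_space"
  by (simp add: space_pair_measure split_point_def)

lemma split_gen_subset_Pow: "split_gen R \<subseteq> Pow \<Omega>"
  using sigma_fun_subset_Pow random_time_sigma_subset_Pow by blast

lemma trace_split_gen_vimage:
  assumes A: "A \<in> sigma_sets \<Omega> (split_gen R)"
  shows "\<exists>S\<in>sets split_space.
    {\<omega> \<in> \<Omega>. R \<omega> < \<infinity>} \<inter> A = {\<omega> \<in> \<Omega>. R \<omega> < \<infinity> \<and> split_point R \<omega> \<in> S}"
proof -
  let ?g1 = "{(\<lambda>\<omega>. ndiv (\<tau> \<omega>) (R \<omega>)) -` B \<inter> \<Omega> | B. B \<in> sets (borel :: ennreal measure)}"
  let ?g2 = "{{\<omega> \<in> \<Omega>. (if R \<omega> < \<infinity> then X (enn2real (R \<omega>), \<omega>) else (0::real)) \<in> B} | X B.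
      X \<in> borel_measurable (optional_measure \<Omega> F) \<and> B \<in> sets borel}"
  have "split_gen R \<subseteq> sigma_sets \<Omega> (?g1 \<union> ?g2)"
    unfolding sigma_fun_def random_time_sigma_def by (intro Un_least sigma_sets_mono') auto
  with A have "A \<in> sigma_sets \<Omega> (?g1 \<union> ?g2)" using sigma_sets_mono by blast
  then show ?thesis
  proof (induction rule: sigma_sets.induct)
    case (Basic a)
    then show ?case
    proof
      assume "a \<in> ?g1"
      then obtain B :: "ennreal set" where B: "a = (\<lambda>\<omega>. ndiv (\<tau> \<omega>) (R \<omega>)) -` B \<inter> \<Omega>" "B \<in> sets borel" by blast
      have "B \<times> space (optional_measure \<Omega> F) \<in> sets split_space"
        by (rule pair_measureI[OF B(2) sets.top])
      moreover have "{\<omega> \<in> \<Omega>. R \<omega> < \<infinity>} \<inter> a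
          = {\<omega> \<in> \<Omega>. R \<omega> < \<infinity> \<and> split_point R \<omega> \<in> B \<times> space (optional_measure \<Omega> F)}"
        using B(1) by (auto simp: split_point_def)
      ultimately show ?thesis by blast
    next
      assume "a \<in> ?g2"
      then obtain X :: "real \<times> 'a \<Rightarrow> real" and B :: "real set" where XB: "a = {\<omega> \<in> \<Omega>. (if R \<omega> < \<infinity> then X (enn2real (R \<omega>), \<omega>) else 0) \<in> B}"
        "X \<in> borel_measurable (optional_measure \<Omega> F)" "B \<in> sets borel" by blast
      have "UNIV \<times> (X -` B \<inter> space (optional_measure \<Omega> F)) \<in> sets split_space"
        using measurable_sets[OF XB(2,3)] by (intro pair_measureI) auto
      moreover have "{\<omega> \<in> \<Omega>. R \<omega> < \<infinity>} \<inter> a = {\<omega> \<in> \<Omega>. R \<omega> < \<infinity>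
          \<and> split_point R \<omega> \<in> UNIV \<times> (X -` B \<inter> space (optional_measure \<Omega> F))}"
        using XB(1) by (auto simp: split_point_def)
      ultimately show ?thesis by blast
    qed
  next
    case Empty
    then show ?case by (intro bexI[of _ "{}"]) auto
  next
    case (Compl a)
    then obtain S where "S \<in> sets split_space"
      "{\<omega> \<in> \<Omega>. R \<omega> < \<infinity>} \<inter> a = {\<omega> \<in> \<Omega>. R \<omega> < \<infinity> \<and> split_point R \<omega> \<in> S}"
      by blast
    moreover from this(2) have "{\<omega> \<in> \<Omega>. R \<omega> < \<infinity>} \<inter> (\<Omega> - a)
        = {\<omega> \<in> \<Omega>. R \<omega> < \<infinity> \<and> split_point R \<omega> \<in> space split_space - S}"
      using split_point_space[of _ R] by (auto simp del: space_pair_measure)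
    ultimately show ?case by blast
  next
    case (Union a)
    then have "\<forall>i. \<exists>S. S \<in> sets split_space
        \<and> {\<omega> \<in> \<Omega>. R \<omega> < \<infinity>} \<inter> a i = {\<omega> \<in> \<Omega>. R \<omega> < \<infinity> \<and> split_point R \<omega> \<in> S}"
      by blast
    then obtain S where S: "\<And>i. S i \<in> sets split_space"
      "\<And>i. {\<omega> \<in> \<Omega>. R \<omega> < \<infinity>} \<inter> a i = {\<omega> \<in> \<Omega>. R \<omega> < \<infinity> \<and> split_point R \<omega> \<in> S i}"
      by (auto dest!: choice)
    then have "{\<omega> \<in> \<Omega>. R \<omega> < \<infinity>} \<inter> \<Union> (range a)
        = {\<omega> \<in> \<Omega>. R \<omega> < \<infinity> \<and> split_point R \<omega> \<in> (\<Union>i. S i)}"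
      by blast
    moreover have "(\<Union>i. S i) \<in> sets split_space"
      using S(1) by (intro sets.countable_nat_UN) auto
    ultimately show ?case by blast
  qed
qed


lemma vimage_split_gen_trace:
  assumes "S \<in> sets split_space"
  shows "\<exists>A\<in>sigma_sets \<Omega> (split_gen R).
    {\<omega> \<in> \<Omega>. R \<omega> < \<infinity>} \<inter> A = {\<omega> \<in> \<Omega>. R \<omega> < \<infinity> \<and> split_point R \<omega> \<in> S}"
  using assms unfolding sets_pair_measure
proof (induction rule: sigma_sets.induct)
  case (Basic s)
  then obtain a b where ab: "s = a \<times> b" "a \<in> sets (borel :: ennreal measure)"
    "b \<in> sets (optional_measure \<Omega> F)"
    by blast
  let ?A1 = "{\<omega> \<in> \<Omega>. ndiv (\<tau> \<omega>) (R \<omega>) \<in> a}"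
  let ?A2 = "{\<omega> \<in> \<Omega>. (if R \<omega> < \<infinity> then indicator b (enn2real (R \<omega>), \<omega>) else (0::real)) \<in> {1}}"
  interpret S: sigma_algebra \<Omega> "sigma_sets \<Omega> (split_gen R)"
    using split_gen_subset_Pow by (rule sigma_algebra_sigma_sets)
  have "?A1 \<in> sigma_sets \<Omega> (split_gen R)"
    by (intro sigma_sets.Basic UnI1 sigma_funI ab(2))
  moreover have "?A2 \<in> random_time_sigma \<Omega> F R"
    unfolding random_time_sigma_def using borel_measurable_indicator[OF ab(3)]
    by (intro sigma_sets.Basic CollectI exI[of _ "indicator b"] exI[of _ "{1}"]) auto
  then have "?A2 \<in> sigma_sets \<Omega> (split_gen R)" by blast
  moreover have "{\<omega> \<in> \<Omega>. R \<omega> < \<infinity>} \<inter> (?A1 \<inter> ?A2)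
      = {\<omega> \<in> \<Omega>. R \<omega> < \<infinity> \<and> split_point R \<omega> \<in> s}"
    using ab(1) by (auto simp: split_point_def indicator_def)
  ultimately show ?case by blast
next
  case Empty
  then show ?case by (intro bexI[of _ "{}"]) (auto intro: sigma_sets.Empty)
next
  case (Compl s)
  then obtain A where "A \<in> sigma_sets \<Omega> (split_gen R)"
    "{\<omega> \<in> \<Omega>. R \<omega> < \<infinity>} \<inter> A = {\<omega> \<in> \<Omega>. R \<omega> < \<infinity> \<and> split_point R \<omega> \<in> s}"
    by blast
  moreover from this(2) have "{\<omega> \<in> \<Omega>. R \<omega> < \<infinity>} \<inter> (\<Omega> - A)
      = {\<omega> \<in> \<Omega>. R \<omega> < \<infinity> \<and> split_point R \<omega> \<in> space borel \<times> space (optional_measure \<Omega> F) - s}"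
    using split_point_space[of _ R] by (auto simp: space_pair_measure)
  ultimately show ?case by (blast intro: sigma_sets.Compl)
next
  case (Union s)
  then have "\<forall>i. \<exists>A. A \<in> sigma_sets \<Omega> (split_gen R)
      \<and> {\<omega> \<in> \<Omega>. R \<omega> < \<infinity>} \<inter> A = {\<omega> \<in> \<Omega>. R \<omega> < \<infinity> \<and> split_point R \<omega> \<in> s i}"
    by blast
  then obtain A where A: "\<And>i. A i \<in> sigma_sets \<Omega> (split_gen R)"
    "\<And>i. {\<omega> \<in> \<Omega>. R \<omega> < \<infinity>} \<inter> A i = {\<omega> \<in> \<Omega>. R \<omega> < \<infinity> \<and> split_point R \<omega> \<in> s i}"
    by (auto dest!: choice)
  then have "{\<omega> \<in> \<Omega>. R \<omega> < \<infinity>} \<inter> (\<Union>i. A i)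
      = {\<omega> \<in> \<Omega>. R \<omega> < \<infinity> \<and> split_point R \<omega> \<in> \<Union> (range s)}"
    by blast
  moreover have "(\<Union>i. A i) \<in> sigma_sets \<Omega> (split_gen R)" using A(1) by (rule sigma_sets.Union)
  ultimately show ?case by blast
qed

lemma random_time_sigma_trace_stopped:
  assumes R: "stopping_time_wrt \<Omega> G R" and a: "a \<in> random_time_sigma \<Omega> F R"
  shows "{\<omega> \<in> \<Omega>. R \<omega> < \<infinity>} \<inter> a \<in> stopped_sigma \<Omega> G R"
  using R _ a[unfolded random_time_sigma_def]
proof (rule Int_finite_set_stopped_sigma)
  fix b assume "b \<in> {{\<omega> \<in> \<Omega>. (if R \<omega> < \<infinity> then X (enn2real (R \<omega>), \<omega>) else (0::real)) \<in> B} | X B.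
      X \<in> borel_measurable (optional_measure \<Omega> F) \<and> B \<in> sets borel}"
  then obtain X :: "real \<times> 'a \<Rightarrow> real" and B :: "real set"
    where b: "b = {\<omega> \<in> \<Omega>. (if R \<omega> < \<infinity> then X (enn2real (R \<omega>), \<omega>) else 0) \<in> B}"
      and X: "X \<in> borel_measurable (optional_measure \<Omega> F)" and B: "B \<in> sets borel"
    by blast
  have "{\<omega> \<in> \<Omega>. R \<omega> < \<infinity>} \<inter> b
      = {\<omega> \<in> \<Omega>. R \<omega> < \<infinity> \<and> (enn2real (R \<omega>), \<omega>) \<in> {p \<in> {0..} \<times> \<Omega>. X p \<in> B}}"
    using b by auto
  then show "{\<omega> \<in> \<Omega>. R \<omega> < \<infinity>} \<inter> b \<in> stopped_sigma \<Omega> G R"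
    using optional_sampled_stopped_sigma[OF R optional_sets_vimage[OF F_optional_imp_G_optional[OF X] B]]
    by simp
qed

lemma ndiv_sigma_trace_stopped:
  assumes R: "stopping_time_wrt \<Omega> G R" and a: "a \<in> sigma_fun \<Omega> (\<lambda>\<omega>. ndiv (\<tau> \<omega>) (R \<omega>))"
  shows "{\<omega> \<in> \<Omega>. R \<omega> < \<infinity>} \<inter> a \<in> stopped_sigma \<Omega> G R"
  using R _ a[unfolded sigma_fun_def]
proof (rule Int_finite_set_stopped_sigma)
  fix b assume "b \<in> {(\<lambda>\<omega>. ndiv (\<tau> \<omega>) (R \<omega>)) -` B \<inter> \<Omega> | B. B \<in> sets (borel :: ennreal measure)}"
  then obtain B :: "ennreal set" where "b = {\<omega> \<in> \<Omega>. ndiv (\<tau> \<omega>) (R \<omega>) \<in> B}" "B \<in> sets borel"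
    by blast
  then show "{\<omega> \<in> \<Omega>. R \<omega> < \<infinity>} \<inter> b \<in> stopped_sigma \<Omega> G R"
    using ndiv_finite_stopped_sigma[OF stopping_time_tau R] by simp
qed

lemma split_sigma_trace_stopped:
  assumes R: "stopping_time_wrt \<Omega> G R"
    and A: "A \<in> split_sigma R"
  shows "{\<omega> \<in> \<Omega>. R \<omega> < \<infinity>} \<inter> A \<in> stopped_sigma \<Omega> G R"
  using R _ A
proof (rule Int_finite_set_stopped_sigma)
  interpret GR: sigma_algebra \<Omega> "stopped_sigma \<Omega> G R" by (rule sigma_algebra_stopped_sigma[OF R])
  fix a assume "a \<in> Nsig M F \<tau> \<union> sigma_fun \<Omega> (\<lambda>\<omega>. ndiv (\<tau> \<omega>) (R \<omega>)) \<union> random_time_sigma \<Omega> F R"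
  then show "{\<omega> \<in> \<Omega>. R \<omega> < \<infinity>} \<inter> a \<in> stopped_sigma \<Omega> G R"
    using finite_set_stopped_sigma[OF R] Nsig_subset_stopped_sigma[OF R]
      ndiv_sigma_trace_stopped[OF R] random_time_sigma_trace_stopped[OF R]
    by auto
qed

definition split_factorable :: "('a \<Rightarrow> ennreal) \<Rightarrow> (real \<times> 'a \<Rightarrow> real) \<Rightarrow> bool" where
  "split_factorable R Y \<longleftrightarrow> (\<exists>H\<in>borel_measurable split_space. \<exists>E\<in>tau_Finf. E \<in> null_sets M \<and>
     (\<forall>\<omega>\<in>\<Omega> - E. R \<omega> < \<infinity> \<longrightarrow> Y (enn2real (R \<omega>), \<omega>) = H (split_point R \<omega>)))"

lemma splits_on_graph_iff_split_factorable:
  "splits_on M F \<tau> Y (graph_rt \<Omega> R) \<longleftrightarrow> split_factorable R Y"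
proof
  assume "splits_on M F \<tau> Y (graph_rt \<Omega> R)"
  then obtain Y' Y'' E where Y': "Y' \<in> borel_measurable (optional_measure \<Omega> F)"
    and Y'': "(\<lambda>(u::ennreal, p). Y'' u p) \<in> borel_measurable split_space"
    and E: "E \<in> tau_Finf" "E \<in> sets M" "emeasure M E = 0"
    and split: "\<forall>\<omega>\<in>\<Omega> - E. \<forall>t\<ge>0. (t, \<omega>) \<in> graph_rt \<Omega> R \<longrightarrow>
      Y (t, \<omega>) = (if ennreal t < \<tau> \<omega> then Y' (t, \<omega>) else Y'' (\<tau> \<omega>) (t, \<omega>))"
    unfolding splits_on_def by blast
  define H where "H z = (if fst z = \<top> then Y' (snd z) else Y'' (fst z) (snd z))" for z
  have "H \<in> borel_measurable split_space"
    unfolding H_def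
  proof (rule measurable_If)
    show "(\<lambda>z. Y' (snd z)) \<in> borel_measurable split_space"
      using measurable_snd Y' by (rule measurable_compose)
    show "(\<lambda>z. Y'' (fst z) (snd z)) \<in> borel_measurable split_space"
      using Y'' by (simp add: case_prod_beta')
    have "{z \<in> space split_space. fst z = \<top>} = {\<top>} \<times> space (optional_measure \<Omega> F)"
      by (auto simp: space_pair_measure)
    then show "{z \<in> space split_space. fst z = \<top>} \<in> sets split_space"
      by (simp only:) (rule pair_measureI[OF _ sets.top], simp)
  qed
  moreover have "Y (enn2real (R \<omega>), \<omega>) = H (split_point R \<omega>)"
    if \<omega>: "\<omega> \<in> \<Omega> - E" and fin: "R \<omega> < \<infinity>" for \<omega>
  proof -
    obtain t where t: "R \<omega> = ennreal t" "0 \<le> t"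
      using fin by (cases "R \<omega>" rule: ennreal_cases) auto
    then have "(t, \<omega>) \<in> graph_rt \<Omega> R" using \<omega> by (auto simp: graph_rt_def)
    then show ?thesis
      using split \<omega> t by (auto simp: H_def split_point_def ndiv_def not_le top_unique)
  qed
  ultimately show "split_factorable R Y"
    unfolding split_factorable_def using E by (auto intro!: bexI[of _ E])
next
  assume "split_factorable R Y"
  then obtain H E where H: "H \<in> borel_measurable split_space" and E: "E \<in> tau_Finf" "E \<in> null_sets M"
    and fac: "\<forall>\<omega>\<in>\<Omega> - E. R \<omega> < \<infinity> \<longrightarrow> Y (enn2real (R \<omega>), \<omega>) = H (split_point R \<omega>)"
    unfolding split_factorable_def by blast
  have "(\<lambda>p. H (\<top>, p)) \<in> borel_measurable (optional_measure \<Omega> F)"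
    using H by measurable
  moreover have "(\<lambda>(u::ennreal, p). H (u, p)) \<in> borel_measurable split_space"
    using H by simp
  moreover have "Y (t, \<omega>) = (if ennreal t < \<tau> \<omega> then H (\<top>, (t, \<omega>)) else H (\<tau> \<omega>, (t, \<omega>)))"
    if "\<omega> \<in> \<Omega> - E" "t \<ge> 0" "(t, \<omega>) \<in> graph_rt \<Omega> R" for \<omega> t
  proof -
    have R: "R \<omega> = ennreal t" using that(3) by (simp add: graph_rt_def)
    then have "R \<omega> < \<infinity>" by simp
    then have "Y (enn2real (R \<omega>), \<omega>) = H (split_point R \<omega>)" using fac that(1) by blast
    then show ?thesis
      using R that(2) by (auto simp: split_point_def ndiv_def not_le)
  qed
  ultimately show "splits_on M F \<tau> Y (graph_rt \<Omega> R)"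
    unfolding splits_on_def using E
    by (intro exI[of _ "\<lambda>p. H (\<top>, p)"] exI[of _ "\<lambda>u p. H (u, p)"] conjI exI[of _ E]) auto
qed

lemma split_factorable_add:
  assumes "split_factorable R u" and "split_factorable R v"
  shows "split_factorable R (\<lambda>p. u p + v p)"
proof -
  obtain H1 E1 where H1: "H1 \<in> borel_measurable split_space" "E1 \<in> tau_Finf" "E1 \<in> null_sets M"
    "\<forall>\<omega>\<in>\<Omega> - E1. R \<omega> < \<infinity> \<longrightarrow> u (enn2real (R \<omega>), \<omega>) = H1 (split_point R \<omega>)"
    using assms(1) unfolding split_factorable_def by blast
  obtain H2 E2 where H2: "H2 \<in> borel_measurable split_space" "E2 \<in> tau_Finf" "E2 \<in> null_sets M"
    "\<forall>\<omega>\<in>\<Omega> - E2. R \<omega> < \<infinity> \<longrightarrow> v (enn2real (R \<omega>), \<omega>) = H2 (split_point R \<omega>)"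
    using assms(2) unfolding split_factorable_def by blast
  have "E1 \<union> E2 \<in> tau_Finf" using H1(2) H2(2) by (rule sigma_sets_Un)
  moreover have "E1 \<union> E2 \<in> null_sets M" using H1(3) H2(3) by (rule null_sets.Un)
  moreover have "(\<lambda>z. H1 z + H2 z) \<in> borel_measurable split_space" using H1(1) H2(1) by simp
  ultimately show ?thesis
    unfolding split_factorable_def using H1(4) H2(4)
    by (intro bexI[of _ "\<lambda>z. H1 z + H2 z"] bexI[of _ "E1 \<union> E2"]) auto
qed

lemma split_factorable_cmult:
  assumes "split_factorable R u"
  shows "split_factorable R (\<lambda>p. c * u p)"
proof -
  obtain H E where H: "H \<in> borel_measurable split_space" "E \<in> tau_Finf" "E \<in> null_sets M"
    "\<forall>\<omega>\<in>\<Omega> - E. R \<omega> < \<infinity> \<longrightarrow> u (enn2real (R \<omega>), \<omega>) = H (split_point R \<omega>)"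
    using assms unfolding split_factorable_def by blast
  then show ?thesis
    unfolding split_factorable_def by (intro bexI[of _ "\<lambda>z. c * H z"] bexI[of _ E]) auto
qed

lemma split_factorable_LIMSEQ:
  assumes fac: "\<And>i. split_factorable R (U i)"
    and lim: "\<And>p. p \<in> {0..} \<times> \<Omega> \<Longrightarrow> (\<lambda>i. U i p) \<longlonglongrightarrow> u p"
  shows "split_factorable R u"
proof -
  have "\<forall>i. \<exists>H. H \<in> borel_measurable split_space \<and> (\<exists>E. E \<in> tau_Finf \<and> E \<in> null_sets M \<and>
      (\<forall>\<omega>\<in>\<Omega> - E. R \<omega> < \<infinity> \<longrightarrow> U i (enn2real (R \<omega>), \<omega>) = H (split_point R \<omega>)))"
    using fac unfolding split_factorable_def by blast
  then obtain H where H: "\<And>i. H i \<in> borel_measurable split_space"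
    and "\<forall>i. \<exists>E. E \<in> tau_Finf \<and> E \<in> null_sets M \<and>
      (\<forall>\<omega>\<in>\<Omega> - E. R \<omega> < \<infinity> \<longrightarrow> U i (enn2real (R \<omega>), \<omega>) = H i (split_point R \<omega>))"
    by (auto dest!: choice)
  then obtain E where E: "\<And>i. E i \<in> tau_Finf" "\<And>i. E i \<in> null_sets M"
    "\<And>i. \<forall>\<omega>\<in>\<Omega> - E i. R \<omega> < \<infinity> \<longrightarrow> U i (enn2real (R \<omega>), \<omega>) = H i (split_point R \<omega>)"
    by (auto dest!: choice)
  have "(\<lambda>z. lim (\<lambda>i. H i z)) \<in> borel_measurable split_space"
    using H by measurable
  moreover have "(\<Union>i. E i) \<in> tau_Finf" using E(1) by (rule sigma_sets.Union)
  moreover have "(\<Union>i. E i) \<in> null_sets M" using E(2) by (rule null_sets_UN)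
  moreover have "u (enn2real (R \<omega>), \<omega>) = lim (\<lambda>i. H i (split_point R \<omega>))"
    if \<omega>: "\<omega> \<in> \<Omega> - (\<Union>i. E i)" and fin: "R \<omega> < \<infinity>" for \<omega>
  proof -
    have "(\<lambda>i. U i (enn2real (R \<omega>), \<omega>)) \<longlonglongrightarrow> u (enn2real (R \<omega>), \<omega>)"
      using \<omega> by (intro lim) auto
    moreover have "U i (enn2real (R \<omega>), \<omega>) = H i (split_point R \<omega>)" for i
      using E(3)[of i] \<omega> fin by blast
    ultimately show ?thesis by (simp add: limI)
  qed
  ultimately show ?thesis
    unfolding split_factorable_def by (intro bexI[of _ "\<lambda>z. lim (\<lambda>i. H i z)"] bexI[of _ "\<Union>i. E i"]) auto
qed

lemma stopped_set_trace_split_sigma: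
  assumes B: "B \<in> stopped_sigma \<Omega> G R"
    and fac: "split_factorable R (indicator_after (\<lambda>\<omega>. if \<omega> \<in> B then R \<omega> else \<infinity>))"
  shows "\<exists>A\<in>split_sigma R. {\<omega> \<in> \<Omega>. R \<omega> < \<infinity>} \<inter> A = {\<omega> \<in> \<Omega>. R \<omega> < \<infinity>} \<inter> B"
    (is "\<exists>A\<in>_. ?U \<inter> A = ?U \<inter> B")
proof -
  interpret RHS: sigma_algebra \<Omega> "split_sigma R"
    by (intro sigma_algebra_sigma_sets Un_least Nsig_subset_Pow sigma_fun_subset_Pow
        random_time_sigma_subset_Pow)
  let ?RB = "\<lambda>\<omega>. if \<omega> \<in> B then R \<omega> else \<infinity>"
  obtain H E where H: "H \<in> borel_measurable split_space" and E: "E \<in> tau_Finf" "E \<in> null_sets M"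
    and HE: "\<forall>\<omega>\<in>\<Omega> - E. R \<omega> < \<infinity> \<longrightarrow>
      indicator_after ?RB (enn2real (R \<omega>), \<omega>) = H (split_point R \<omega>)"
    using fac unfolding split_factorable_def by blast
  obtain A0 where A0: "A0 \<in> sigma_sets \<Omega> (split_gen R)"
    "?U \<inter> A0 = {\<omega> \<in> \<Omega>. R \<omega> < \<infinity> \<and> split_point R \<omega> \<in> H -` {1} \<inter> space split_space}"
    using vimage_split_gen_trace[OF measurable_sets[OF H, of "{1}"]] by auto
  have B_iff_A0: "\<omega> \<in> B \<longleftrightarrow> \<omega> \<in> A0" if \<omega>: "\<omega> \<in> ?U" "\<omega> \<notin> E" for \<omega>
  proof -
    have "indicator_after ?RB (enn2real (R \<omega>), \<omega>) = (if \<omega> \<in> B then 1 else 0)"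
      using \<omega> by (cases "R \<omega>" rule: ennreal_cases) (auto simp: indicator_after_def top_unique)
    then have "\<omega> \<in> B \<longleftrightarrow> H (split_point R \<omega>) = 1"
      using HE \<omega> by (auto split: if_splits)
    also have "\<dots> \<longleftrightarrow> \<omega> \<in> ?U \<inter> A0"
      using A0(2) \<omega> split_point_space[of \<omega> R] by auto
    finally show ?thesis using \<omega> by blast
  qed
  have "split_gen R \<subseteq> Nsig M F \<tau> \<union> sigma_fun \<Omega> (\<lambda>\<omega>. ndiv (\<tau> \<omega>) (R \<omega>))
      \<union> random_time_sigma \<Omega> F R"
    by blast
  then have "A0 \<in> split_sigma R" by (rule subsetD[OF sigma_sets_mono' A0(1)])
  moreover have "E \<in> Nsig M F \<tau>" "?U \<inter> B \<inter> E \<in> Nsig M F \<tau>"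
    by (rule null_subset_Nsig[OF _ E]; blast)+
  then have "E \<in> split_sigma R" "?U \<inter> B \<inter> E \<in> split_sigma R"
    by (intro sigma_sets.Basic; simp)+
  ultimately have "(A0 - E) \<union> (?U \<inter> B \<inter> E) \<in> split_sigma R"
    by (intro RHS.Un RHS.Diff)
  moreover have "?U \<inter> ((A0 - E) \<union> (?U \<inter> B \<inter> E)) = ?U \<inter> B"
    using B_iff_A0 by auto
  ultimately show ?thesis by blast
qed

lemma trace_stopped_subset_if_factorable:
  assumes fac: "\<And>Y. Y \<in> borel_measurable (optional_measure \<Omega> G) \<Longrightarrow> split_factorable R Y"
  shows "trace_on {\<omega> \<in> \<Omega>. R \<omega> < \<infinity>} (stopped_sigma \<Omega> G R)
    \<subseteq> trace_on {\<omega> \<in> \<Omega>. R \<omega> < \<infinity>} (split_sigma R)"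
proof
  fix x assume "x \<in> trace_on {\<omega> \<in> \<Omega>. R \<omega> < \<infinity>} (stopped_sigma \<Omega> G R)"
  then obtain B where x: "x = {\<omega> \<in> \<Omega>. R \<omega> < \<infinity>} \<inter> B" and B: "B \<in> stopped_sigma \<Omega> G R"
    unfolding trace_on_def by blast
  have "indicator_after (\<lambda>\<omega>. if \<omega> \<in> B then R \<omega> else \<infinity>) \<in> borel_measurable (optional_measure \<Omega> G)"
    using stopping_time_restrict[OF B]
    by (intro cadlag_adapted_optional_measurable cadlag_adapted_indicator_after)
  then obtain A where "A \<in> split_sigma R" "{\<omega> \<in> \<Omega>. R \<omega> < \<infinity>} \<inter> A = x"
    using stopped_set_trace_split_sigma[OF B fac] x by blast
  then show "x \<in> trace_on {\<omega> \<in> \<Omega>. R \<omega> < \<infinity>} (split_sigma R)"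
    using trace_onI by metis
qed

lemma split_factorable_indicator:
  assumes R: "stopping_time_wrt \<Omega> G R"
    and incl: "trace_on {\<omega> \<in> \<Omega>. R \<omega> < \<infinity>} (stopped_sigma \<Omega> G R)
      \<subseteq> trace_on {\<omega> \<in> \<Omega>. R \<omega> < \<infinity>} (split_sigma R)"
      (is "trace_on ?U _ \<subseteq> trace_on ?U ?RHS")
    and A: "A \<in> optional_sets \<Omega> G"
  shows "split_factorable R (indicator A)"
proof -
  let ?V = "{\<omega> \<in> \<Omega>. R \<omega> < \<infinity> \<and> (enn2real (R \<omega>), \<omega>) \<in> A}"
  have "?U \<inter> ?V \<in> trace_on ?U ?RHS"
    using incl trace_onI[OF optional_sampled_stopped_sigma[OF R A]] by blast
  then obtain A1 where A1: "?U \<inter> ?V = ?U \<inter> A1" "A1 \<in> ?RHS"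
    unfolding trace_on_def by blast
  then have "A1 \<in> sigma_sets \<Omega> (Nsig M F \<tau> \<union> split_gen R)"
    by (simp add: Un_assoc)
  then obtain A' E where A': "A' \<in> sigma_sets \<Omega> (split_gen R)" and E: "E \<in> tau_Finf" "E \<in> null_sets M"
    and A1_A': "A1 - E = A' - E"
    using sigma_sets_Nsig_ae_eq by blast
  obtain S where S: "S \<in> sets split_space" "?U \<inter> A' = {\<omega> \<in> \<Omega>. R \<omega> < \<infinity> \<and> split_point R \<omega> \<in> S}"
    using trace_split_gen_vimage[OF A'] by blast
  have "indicator A (enn2real (R \<omega>), \<omega>) = (indicator S (split_point R \<omega>) :: real)"
    if \<omega>: "\<omega> \<in> \<Omega> - E" "R \<omega> < \<infinity>" for \<omega>
  proof -
    have "(enn2real (R \<omega>), \<omega>) \<in> A \<longleftrightarrow> \<omega> \<in> ?U \<inter> A1"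
      using A1(1) \<omega> by blast
    also have "\<dots> \<longleftrightarrow> \<omega> \<in> ?U \<inter> A'"
      using A1_A' \<omega> by blast
    also have "\<dots> \<longleftrightarrow> split_point R \<omega> \<in> S"
      using S(2) \<omega> by blast
    finally show ?thesis by (simp add: indicator_def)
  qed
  then show ?thesis
    unfolding split_factorable_def using S(1) E
    by (intro bexI[of _ "indicator S"] bexI[of _ E]) auto
qed

lemma split_factorable_optional:
  assumes R: "stopping_time_wrt \<Omega> G R"
    and incl: "trace_on {\<omega> \<in> \<Omega>. R \<omega> < \<infinity>} (stopped_sigma \<Omega> G R)
      \<subseteq> trace_on {\<omega> \<in> \<Omega>. R \<omega> < \<infinity>} (split_sigma R)"
    and Y: "Y \<in> borel_measurable (optional_measure \<Omega> G)"
  shows "split_factorable R Y"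
proof -
  have nonneg: "split_factorable R u"
    if "u \<in> borel_measurable (optional_measure \<Omega> G)" "\<And>p. 0 \<le> u p" for u
    using that
  proof (induction u rule: borel_measurable_induct_real)
    case (set A)
    then show ?case using split_factorable_indicator[OF R incl] by simp
  next
    case (mult u c)
    then show ?case by (simp add: split_factorable_cmult)
  next
    case (add u v)
    then show ?case by (simp add: split_factorable_add)
  next
    case (seq U)
    show ?case
    proof (rule split_factorable_LIMSEQ)
      show "split_factorable R (U i)" for i using seq.IH by blast
      show "(\<lambda>i. U i p) \<longlonglongrightarrow> u p" if "p \<in> {0..} \<times> \<Omega>" for p
        using seq that by simp
    qed
  qed
  have [measurable]: "Y \<in> borel_measurable (optional_measure \<Omega> G)" by (rule Y)
  have "split_factorable R (\<lambda>p. max (Y p) 0)"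
    by (rule nonneg) auto
  moreover have "split_factorable R (\<lambda>p. max (- Y p) 0)"
    by (rule nonneg) auto
  then have "split_factorable R (\<lambda>p. (-1) * max (- Y p) 0)"
    by (rule split_factorable_cmult)
  ultimately have "split_factorable R (\<lambda>p. max (Y p) 0 + (-1) * max (- Y p) 0)"
    by (rule split_factorable_add)
  moreover have "(\<lambda>p. max (Y p) 0 + (-1) * max (- Y p) 0) = Y"
    by (auto simp: max_def)
  ultimately show ?thesis by simp
qed

theorem graph_Lo_iff_trace_stopped_eq:
  assumes R: "stopping_time_wrt \<Omega> G R"
  shows "graph_rt \<Omega> R \<in> Lo M F \<tau> \<longleftrightarrow>
    trace_on {\<omega> \<in> \<Omega>. R \<omega> < \<infinity>} (stopped_sigma \<Omega> G R) =
    trace_on {\<omega> \<in> \<Omega>. R \<omega> < \<infinity>} (split_sigma R)"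
    (is "_ \<longleftrightarrow> trace_on ?U ?GR = trace_on ?U ?RHS")
proof -
  have "trace_on ?U ?RHS \<subseteq> trace_on ?U ?GR"
  proof
    fix x assume "x \<in> trace_on ?U ?RHS"
    then obtain A where "x = ?U \<inter> A" "A \<in> ?RHS" unfolding trace_on_def by blast
    then have "x = ?U \<inter> (?U \<inter> A)" "?U \<inter> A \<in> ?GR"
      using split_sigma_trace_stopped[OF R] by auto
    then show "x \<in> trace_on ?U ?GR" using trace_onI by metis
  qed
  moreover have "graph_rt \<Omega> R \<in> Lo M F \<tau> \<longleftrightarrow>
      (\<forall>Y. Y \<in> borel_measurable (optional_measure \<Omega> G) \<longrightarrow> split_factorable R Y)"
    using graph_rt_optional[OF R] by (simp add: Lo_def splits_on_graph_iff_split_factorable)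
  ultimately show ?thesis
    using trace_stopped_subset_if_factorable split_factorable_optional[OF R] by blast
qed

end

theorem mainTheorem7:
  fixes M :: "'a measure" and F :: "real \<Rightarrow> 'a set set"
    and \<tau> R :: "'a \<Rightarrow> ennreal"
  assumes "prob_space M"
    and "usual_filtration M F"
    and "\<tau> \<in> borel_measurable M"
    and "stopping_time_wrt (space M) (Gfilt M F \<tau>) R"
  shows "graph_rt (space M) R \<in> Lo M F \<tau> \<longleftrightarrow>
    trace_on {\<omega>\<in>space M. R \<omega> < \<infinity>} (stopped_sigma (space M) (Gfilt M F \<tau>) R) =
    trace_on {\<omega>\<in>space M. R \<omega> < \<infinity>}
      (sigma_sets (space M) (Nsig M F \<tau> \<union> sigma_fun (space M) (\<lambda>\<omega>. ndiv (\<tau> \<omega>) (R \<omega>))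
                             \<union> random_time_sigma (space M) F R))"
proof -
  txt \<open>Neither the probability measure nor the measurability of \<open>\<tau>\<close> plays a role: the
    definitions only ever use null sets that are explicitly measurable.\<close>
  interpret progressive_enlargement M F \<tau>
    using assms(2) by (intro progressive_enlargement.intro usual_filtration_imp_filtration_sets)
  show ?thesis
    using assms(4) by (rule graph_Lo_iff_trace_stopped_eq)
qed

end
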